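(* Under the model assumptions, fix $q\in(0,1)$, $\tilde w^0\in\mathrm{dom}(h)$ and $\rho_1,\dots,\rho_n>0$. There is a constant $C>0$ independent of $\tau$ such that for every $\tau\in(0,1]$, Algorithm 2 applied to $\min_w \sum_{i=0}^nP_i(w)+h(w)$ with inputs $\tau,q,\tilde w^0,\rho_1,\dots,\rho_n$ terminates after at most $C(1+|\log\tau|)$ iterations.
   Context: Let $n,d\ge1$. Model assumptions: $P_0,\dots,P_n:\mathbb{R}^d\to\mathbb{R}$ are continuously differentiable with locally Lipschitz gradients on $\mathbb{R}^d$, and each is strongly convex with modulus $\sigma>0$, i.e. $\langle\nabla P_i(u)-\nabla P_i(v),u-v\rangle\ge\sigma\|u-v\|^2$ for all $u,v$; $h:\mathbb{R}^d\to(-\infty,\infty]$ is proper closed convex. $\|\cdot\|$ Euclidean, $\|\cdot\|_\infty$ max norm, $\partial$ convex subdifferential, $\mathrm{dist}_\infty(u,S)=\inf_{v\in S}\|u-v\|_\infty$. Algorithm 2: inputs $\tau\in(0,1]$, $q\in(0,1)$, $\tilde w^0\in\mathrm{dom}(h)$, $\rho_i>0$ ($1\le i\le n$). Initialize $w^0=\tilde w^0$, $u_i^0=\tilde w^0$, $\lambda_i^0=-\nabla P_i(\tilde w^0)$, $\tilde u_i^0=\tilde w^0-\nabla P_i(\tilde w^0)/\rho_i$. For $t=0,1,2,\dots$: set $\varepsilon_{t+1}=q^t$; let $w^{t+1}$ be any point with $\mathrm{dist}_\infty(0,\partial\varphi_{0,t}(w^{t+1}))\le\varepsilon_{t+1}$,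 where $\varphi_{0,t}(w)=P_0(w)+h(w)+\sum_{i=1}^n\frac{\rho_i}2\|\tilde u_i^t-w\|^2$; for each $1\le i\le n$ let $u_i^{t+1}$ be any point with $\|\nabla\varphi_{i,t}(u_i^{t+1})\|_\infty\le\varepsilon_{t+1}$, where $\varphi_{i,t}(u)=P_i(u)+\langle\lambda_i^t,u-w^{t+1}\rangle+\frac{\rho_i}2\|u-w^{t+1}\|^2$; set $\lambda_i^{t+1}=\lambda_i^t+\rho_i(u_i^{t+1}-w^{t+1})$, $\tilde u_i^{t+1}=u_i^{t+1}+\lambda_i^{t+1}/\rho_i$, $\tilde\varepsilon_{i,t+1}=\|\nabla\varphi_{i,t}(w^{t+1})-\rho_i(w^{t+1}-u_i^t)\|_\infty$; terminate and output $w^{t+1}$ if $\varepsilon_{t+1}+\sum_{i=1}^n\tilde\varepsilon_{i,t+1}\le\tau$. *)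

theory Defs
  imports "HOL-Analysis.Analysis"
begin

definition proper_closed_convex :: "('a::real_normed_vector \<Rightarrow> ereal) \<Rightarrow> bool" where
  "proper_closed_convex h \<longleftrightarrow>
     (\<forall>x. h x \<noteq> -\<infinity>) \<and> (\<exists>x. h x \<noteq> \<infinity>) \<and>
     closed {(x, r::real). h x \<le> ereal r} \<and>
     (\<forall>x y t. 0 \<le> t \<and> t \<le> 1 \<longrightarrow>
        h ((1 - t) *\<^sub>R x + t *\<^sub>R y) \<le> ereal (1 - t) * h x + ereal t * h y)"

definition subdiff :: "('a::real_inner \<Rightarrow> ereal) \<Rightarrow> 'a \<Rightarrow> 'a set" where
  "subdiff f x = {g. f x \<noteq> \<infinity> \<and> (\<forall>y. f y \<ge> f x + ereal (g \<bullet> (y - x)))}"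

text \<open>Max-norm distance from 0 to a set (infimum, = +inf for the empty set).\<close>
definition dist_inf0 :: "(real ^ 'd) set \<Rightarrow> ereal" where
  "dist_inf0 S = (INF g\<in>S. ereal (infnorm g))"

definition smooth_strongly_convex ::
  "(real ^ 'd \<Rightarrow> real) \<Rightarrow> (real ^ 'd \<Rightarrow> real ^ 'd) \<Rightarrow> real \<Rightarrow> bool" where
  "smooth_strongly_convex P gP \<sigma> \<longleftrightarrow>
     (\<forall>x. (P has_derivative (\<lambda>v. gP x \<bullet> v)) (at x)) \<and>
     (\<forall>x. \<exists>\<delta>>0. \<exists>L. \<forall>u\<in>ball x \<delta>. \<forall>v\<in>ball x \<delta>. norm (gP u - gP v) \<le> L * norm (u - v)) \<and>
     (\<forall>u v. (gP u - gP v) \<bullet> (u - v) \<ge> \<sigma> * (norm (u - v))\<^sup>2)"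

text \<open>\<open>phi0 n P h \<rho> ut w\<close> is \<open>\<phi>_{0,t}\<close> with \<open>ut i = \<tilde>u_i^t\<close>.\<close>
definition phi0 :: "nat \<Rightarrow> (nat \<Rightarrow> real ^ 'd \<Rightarrow> real) \<Rightarrow> (real ^ 'd \<Rightarrow> ereal) \<Rightarrow> (nat \<Rightarrow> real)
                     \<Rightarrow> (nat \<Rightarrow> real ^ 'd) \<Rightarrow> real ^ 'd \<Rightarrow> ereal" where
  "phi0 n P h \<rho> ut w = ereal (P 0 w) + h w + ereal (\<Sum>i=1..n. \<rho> i / 2 * (norm (ut i - w))\<^sup>2)"

text \<open>Gradient of \<open>\<phi>_{i,t}(u) = P_i(u) + <\<lambda>, u - w> + \<rho>/2 |u - w|^2\<close>.\<close>
definition grad_phi :: "(real ^ 'd \<Rightarrow> real ^ 'd) \<Rightarrow> real \<Rightarrow> real ^ 'd \<Rightarrow> real ^ 'd \<Rightarrow> real ^ 'd \<Rightarrow> real ^ 'd" where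
  "grad_phi gP r lam w u = gP u + lam + r *\<^sub>R (u - w)"

text \<open>The tilde-variables satisfy \<open>\<tilde>u_i^t = u_i^t + \<lambda>_i^t/\<rho>_i\<close> for all t (also t = 0).\<close>
definition alg2_run ::
  "nat \<Rightarrow> (nat \<Rightarrow> real ^ 'd \<Rightarrow> real) \<Rightarrow> (nat \<Rightarrow> real ^ 'd \<Rightarrow> real ^ 'd) \<Rightarrow> (real ^ 'd \<Rightarrow> ereal)
   \<Rightarrow> real \<Rightarrow> real ^ 'd \<Rightarrow> (nat \<Rightarrow> real)
   \<Rightarrow> (nat \<Rightarrow> real ^ 'd) \<Rightarrow> (nat \<Rightarrow> nat \<Rightarrow> real ^ 'd) \<Rightarrow> (nat \<Rightarrow> nat \<Rightarrow> real ^ 'd) \<Rightarrow> bool" where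
  "alg2_run n P gP h q w0 \<rho> w u lam \<longleftrightarrow>
     w 0 = w0 \<and>
     (\<forall>i\<in>{1..n}. u i 0 = w0 \<and> lam i 0 = - gP i w0) \<and>
     (\<forall>t. dist_inf0 (subdiff (phi0 n P h \<rho> (\<lambda>i. u i t + (1 / \<rho> i) *\<^sub>R lam i t)) (w (Suc t)))
            \<le> ereal (q ^ t)) \<and>
     (\<forall>t. \<forall>i\<in>{1..n}.
        infnorm (grad_phi (gP i) (\<rho> i) (lam i t) (w (Suc t)) (u i (Suc t))) \<le> q ^ t \<and>
        lam i (Suc t) = lam i t + \<rho> i *\<^sub>R (u i (Suc t) - w (Suc t)))"

text \<open>\<open>\<tilde>\<epsilon>_{i,t+1}\<close>.\<close>
definition eps_tilde ::
  "(nat \<Rightarrow> real ^ 'd \<Rightarrow> real ^ 'd) \<Rightarrow> (nat \<Rightarrow> real) \<Rightarrow> (nat \<Rightarrow> real ^ 'd)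
   \<Rightarrow> (nat \<Rightarrow> nat \<Rightarrow> real ^ 'd) \<Rightarrow> (nat \<Rightarrow> nat \<Rightarrow> real ^ 'd) \<Rightarrow> nat \<Rightarrow> nat \<Rightarrow> real" where
  "eps_tilde gP \<rho> w u lam i t =
     infnorm (grad_phi (gP i) (\<rho> i) (lam i t) (w (Suc t)) (w (Suc t))
              - \<rho> i *\<^sub>R (w (Suc t) - u i t))"

end

theory Submission
  imports Defs
begin

text \<open>Let \<open>ws\<close> minimise \<open>P\<^sub>0 + \<dots> + P\<^sub>n + h\<close> and \<open>\<lambda>\<^sub>i\<^sup>* = -\<nabla>P\<^sub>i(ws)\<close>. The Lyapunov function
  \<open>V\<^sub>t = \<Sum>\<^sub>i |\<lambda>\<^sub>i\<^sup>t - \<lambda>\<^sub>i\<^sup>*|\<^sup>2/\<rho>\<^sub>i + \<rho>\<^sub>i |u\<^sub>i\<^sup>t - ws|\<^sup>2\<close> decreases along the iteration up to error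
  terms of order \<open>q\<^sup>t\<close> times distances to the solution. A crude estimate
  \<open>V\<^sub>t\<^sub>+\<^sub>1 \<le> (1 + a q\<^sup>t) V\<^sub>t + b q\<^sup>t\<close> shows that \<open>V\<close> stays bounded, so all iterates remain in a
  fixed ball around \<open>ws\<close>, on which the gradients are Lipschitz. There strong convexity gives the
  contraction \<open>V\<^sub>t\<^sub>+\<^sub>1 \<le> \<theta> V\<^sub>t + e q\<^sup>t\<close> with \<open>\<theta> < 1\<close>, hence \<open>V\<^sub>t = O(r\<^sup>t)\<close> for some \<open>r < 1\<close>;
  the stopping quantities are \<open>O(\<surd>r\<^sup>t)\<close> and drop below \<open>\<tau>\<close> after \<open>O(1 + |log \<tau>|)\<close> steps.\<close>

lemma has_real_derivative_along_line:
  fixes P :: "'a::real_inner \<Rightarrow> real"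
  assumes "(P has_derivative (\<lambda>w. g \<bullet> w)) (at (x + s0 *\<^sub>R v))"
  shows "((\<lambda>s. P (x + s *\<^sub>R v)) has_real_derivative (g \<bullet> v)) (at s0)"
proof -
  have "((\<lambda>s. x + s *\<^sub>R v) has_derivative (\<lambda>s. s *\<^sub>R v)) (at s0)"
    by (auto intro!: derivative_eq_intros)
  from has_derivative_compose[OF this assms]
  have "((\<lambda>s. P (x + s *\<^sub>R v)) has_derivative (\<lambda>s. g \<bullet> (s *\<^sub>R v))) (at s0)" by simp
  moreover have "(\<lambda>s. g \<bullet> (s *\<^sub>R v)) = (*) (g \<bullet> v)" by (auto simp: mult.commute)
  ultimately show ?thesis unfolding has_field_derivative_def by simp
qed

lemma smooth_strongly_convex_quadratic_minorant:
  assumes "smooth_strongly_convex P gP \<sigma>"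
  shows "P x + gP x \<bullet> (y - x) + \<sigma>/2 * (norm (y - x))\<^sup>2 \<le> P y"
proof -
  define v where "v = y - x"
  define f where "f s = P (x + s *\<^sub>R v) - s * (gP x \<bullet> v) - \<sigma>/2 * s^2 * (norm v)^2" for s
  have der: "\<And>z. (P has_derivative (\<lambda>v. gP z \<bullet> v)) (at z)"
    and mon: "\<And>u w. \<sigma> * (norm (u - w))\<^sup>2 \<le> (gP u - gP w) \<bullet> (u - w)"
    using assms unfolding smooth_strongly_convex_def by auto
  have "f 0 \<le> f 1"
  proof (rule DERIV_nonneg_imp_nondecreasing[of 0 1 f])
    fix s :: real assume s: "0 \<le> s" "s \<le> 1"
    have "((\<lambda>s. P (x + s *\<^sub>R v)) has_real_derivative (gP (x + s *\<^sub>R v) \<bullet> v)) (at s)"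
      using der by (rule has_real_derivative_along_line)
    moreover have "((\<lambda>s. s * (gP x \<bullet> v)) has_real_derivative (gP x \<bullet> v)) (at s)"
      by (auto intro!: derivative_eq_intros)
    moreover have "((\<lambda>s. \<sigma>/2 * s^2 * (norm v)^2) has_real_derivative (\<sigma> * s * (norm v)^2)) (at s)"
      by (auto intro!: derivative_eq_intros)
    ultimately have "(f has_real_derivative (gP (x + s *\<^sub>R v) \<bullet> v - gP x \<bullet> v - \<sigma> * s * (norm v)^2)) (at s)"
      unfolding f_def by (intro DERIV_diff)
    moreover have "\<sigma> * s * (norm v)^2 \<le> (gP (x + s *\<^sub>R v) - gP x) \<bullet> v"
    proof (cases "s = 0")
      case False
      then have sp: "s > 0" using s by auto
      have "s * (\<sigma> * s * (norm v)^2) \<le> s * ((gP (x + s *\<^sub>R v) - gP x) \<bullet> v)"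
        using mon[of "x + s *\<^sub>R v" x] sp by (simp add: power2_eq_square algebra_simps)
      then show ?thesis using sp by simp
    qed simp
    ultimately show "\<exists>y. (f has_real_derivative y) (at s) \<and> 0 \<le> y"
      by (auto simp: inner_diff_left)
  qed simp
  then show ?thesis unfolding f_def v_def by simp
qed

lemma proper_closed_convex_not_MInfty:
  "proper_closed_convex h \<Longrightarrow> h x \<noteq> -\<infinity>"
  unfolding proper_closed_convex_def by auto

lemma proper_closed_convex_closed_epigraph:
  "proper_closed_convex h \<Longrightarrow> closed {(x, r::real). h x \<le> ereal r}"
  unfolding proper_closed_convex_def by auto

lemma proper_closed_convex_convex_ineq:
  "proper_closed_convex h \<Longrightarrow> 0 \<le> t \<Longrightarrow> t \<le> 1 \<Longrightarrow>
     h ((1 - t) *\<^sub>R x + t *\<^sub>R y) \<le> ereal (1 - t) * h x + ereal t * h y"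
  unfolding proper_closed_convex_def by auto

lemma subgradient_of_differentiable_plus_convex:
  fixes S :: "'a::real_inner \<Rightarrow> real"
  assumes h: "proper_closed_convex h"
    and dS: "(S has_derivative (\<lambda>w. a \<bullet> w)) (at x)"
    and hx: "h x \<noteq> \<infinity>"
    and sub: "\<And>y. ereal (S x) + h x + ereal (g \<bullet> (y - x)) \<le> ereal (S y) + h y"
  shows "h x + ereal ((g - a) \<bullet> (y - x)) \<le> h y"
proof (cases "h y = \<infinity>")
  case False
  obtain hx' where hx': "h x = ereal hx'"
    using hx proper_closed_convex_not_MInfty[OF h] by (cases "h x") auto
  obtain hy where hy: "h y = ereal hy"
    using False proper_closed_convex_not_MInfty[OF h] by (cases "h y") auto
  define v where "v = y - x"
  have quotient_le: "g \<bullet> v - (S (x + s *\<^sub>R v) - S x) / s \<le> hy - hx'" if s: "0 < s" "s < 1" for s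
  proof -
    let ?z = "(1 - s) *\<^sub>R x + s *\<^sub>R y"
    have z: "?z = x + s *\<^sub>R v" by (simp add: v_def algebra_simps)
    have "h ?z \<le> ereal ((1 - s) * hx' + s * hy)"
      using proper_closed_convex_convex_ineq[OF h, of s x y] s by (simp add: hx' hy)
    then obtain hz where hz: "h ?z = ereal hz" "hz \<le> (1 - s) * hx' + s * hy"
      using proper_closed_convex_not_MInfty[OF h] by (cases "h ?z") auto
    have "S x + hx' + s * (g \<bullet> v) \<le> S (x + s *\<^sub>R v) + hz"
      using sub[of ?z] hz(1) unfolding z by (simp add: hx')
    then have "s * (g \<bullet> v) - (S (x + s *\<^sub>R v) - S x) \<le> s * (hy - hx')"
      using hz(2) by (simp add: algebra_simps)
    then show ?thesis using s by (simp add: field_simps)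
  qed
  have "((\<lambda>s. S (x + s *\<^sub>R v)) has_real_derivative (a \<bullet> v)) (at 0 within {0<..})"
    using has_real_derivative_along_line[of S a x 0 v] dS by (simp add: has_field_derivative_at_within)
  then have "((\<lambda>s. (S (x + s *\<^sub>R v) - S x) / s) \<longlongrightarrow> a \<bullet> v) (at_right 0)"
    unfolding has_field_derivative_iff by simp
  then have "((\<lambda>s. g \<bullet> v - (S (x + s *\<^sub>R v) - S x) / s) \<longlongrightarrow> g \<bullet> v - a \<bullet> v) (at_right 0)"
    by (intro tendsto_intros)
  moreover have "eventually (\<lambda>s. g \<bullet> v - (S (x + s *\<^sub>R v) - S x) / s \<le> hy - hx') (at_right 0)"
    unfolding eventually_at_right[OF zero_less_one] using quotient_le by (auto intro!: exI[of _ 1])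
  ultimately have "g \<bullet> v - a \<bullet> v \<le> hy - hx'" by (rule tendsto_upperbound) simp
  then show ?thesis by (simp add: hx' hy v_def inner_diff_left)
qed simp

lemma smooth_strongly_convex_gradient_continuous:
  fixes gP :: "real ^ 'd \<Rightarrow> real ^ 'd"
  assumes "smooth_strongly_convex P gP \<sigma>"
  shows "continuous_on UNIV gP"
proof (rule continuous_at_imp_continuous_on, intro ballI)
  fix x
  obtain \<delta> L where \<delta>: "\<delta> > 0"
    and L: "\<forall>u\<in>ball x \<delta>. \<forall>v\<in>ball x \<delta>. norm (gP u - gP v) \<le> L * norm (u - v)"
    using assms unfolding smooth_strongly_convex_def by blast
  have "(max L 0)-lipschitz_on (ball x \<delta>) gP"
  proof (rule lipschitz_onI)
    fix u v assume "u \<in> ball x \<delta>" "v \<in> ball x \<delta>"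
    then have "norm (gP u - gP v) \<le> L * norm (u - v)" using L by blast
    also have "\<dots> \<le> max L 0 * norm (u - v)" by (intro mult_right_mono) auto
    finally show "dist (gP u) (gP v) \<le> max L 0 * dist u v" by (simp add: dist_norm)
  qed simp
  then have "continuous_on (ball x \<delta>) gP" by (rule lipschitz_on_continuous_on)
  then show "isCont gP x" using \<delta> by (simp add: continuous_on_interior)
qed

text \<open>Local Lipschitz continuity only controls \<open>gP\<close> near \<open>c\<close>; farther out, boundedness of
  \<open>gP\<close> on the compact ball gives the same linear bound in \<open>norm (z - c)\<close>.\<close>
lemma smooth_strongly_convex_gradient_calm:
  fixes gP :: "real ^ 'd \<Rightarrow> real ^ 'd"
  assumes "smooth_strongly_convex P gP \<sigma>"
  obtains L where "L \<ge> 0" "\<And>z. norm (z - c) \<le> R \<Longrightarrow> norm (gP z - gP c) \<le> L * norm (z - c)"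
proof -
  have "bounded (gP ` cball c R)"
    by (intro compact_imp_bounded compact_continuous_image continuous_on_subset[OF
          smooth_strongly_convex_gradient_continuous[OF assms]]) auto
  then obtain B where B: "\<forall>z\<in>cball c R. norm (gP z) \<le> B" by (auto simp: bounded_iff)
  obtain \<delta> L where \<delta>: "\<delta> > 0"
    and L: "\<forall>u\<in>ball c \<delta>. \<forall>v\<in>ball c \<delta>. norm (gP u - gP v) \<le> L * norm (u - v)"
    using assms unfolding smooth_strongly_convex_def by blast
  define L' where "L' = max (max L 0) (2 * max B 0 / \<delta>)"
  have "norm (gP z - gP c) \<le> L' * norm (z - c)" if z: "norm (z - c) \<le> R" for z
  proof (cases "norm (z - c) < \<delta>")
    case True
    then have "z \<in> ball c \<delta>" "c \<in> ball c \<delta>" using \<delta> by (auto simp: dist_norm norm_minus_commute)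
    then have "norm (gP z - gP c) \<le> L * norm (z - c)" using L by blast
    also have "\<dots> \<le> L' * norm (z - c)" by (intro mult_right_mono) (auto simp: L'_def)
    finally show ?thesis .
  next
    case False
    have "0 \<le> R" using z norm_ge_zero[of "z - c"] by linarith
    then have "z \<in> cball c R" "c \<in> cball c R" using z by (auto simp: dist_norm norm_minus_commute)
    then have "norm (gP z) \<le> B" "norm (gP c) \<le> B" using B by auto
    then have "norm (gP z) + norm (gP c) \<le> 2 * max B 0" by linarith
    then have "norm (gP z - gP c) \<le> 2 * max B 0"
      using norm_triangle_ineq4[of "gP z" "gP c"] by linarith
    also have "\<dots> = (2 * max B 0 / \<delta>) * \<delta>" using \<delta> by simp
    also have "\<dots> \<le> (2 * max B 0 / \<delta>) * norm (z - c)" using False \<delta> by (intro mult_left_mono) auto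
    also have "\<dots> \<le> L' * norm (z - c)" by (intro mult_right_mono) (auto simp: L'_def)
    finally show ?thesis .
  qed
  moreover have "L' \<ge> 0" by (simp add: L'_def)
  ultimately show ?thesis using that by blast
qed

lemma smooth_plus_convex_exceeds_outside_ball:
  fixes F :: "'a::real_inner \<Rightarrow> real"
  assumes hw0: "h w0 = ereal hv"
    and minorant: "\<And>y. ereal (c0 + \<xi> \<bullet> y) \<le> h y"
    and growth: "\<And>y. F w0 + G \<bullet> (y - w0) + \<mu> * (norm (y - w0))^2 \<le> F y"
    and \<mu>: "\<mu> > 0"
  obtains R where "R \<ge> 1" "\<And>y. R < norm (y - w0) \<Longrightarrow> ereal (F w0) + h w0 < ereal (F y) + h y"
proof -
  define B where "B = norm G + norm \<xi>"
  define D where "D = hv - c0 - \<xi> \<bullet> w0"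
  define R where "R = 1 + (B + \<bar>D\<bar>) / \<mu>"
  have R1: "R \<ge> 1" using \<mu> by (simp add: R_def B_def)
  have "ereal (F w0) + h w0 < ereal (F y) + h y" if y: "R < norm (y - w0)" for y
  proof -
    define r where "r = norm (y - w0)"
    have "\<mu> * R < \<mu> * r" using y \<mu> by (simp add: r_def)
    moreover have "\<mu> * R = \<mu> + B + \<bar>D\<bar>" using \<mu> by (simp add: R_def field_simps)
    ultimately have m: "\<mu> + \<bar>D\<bar> < \<mu> * r - B" by simp
    moreover have "1 * (\<mu> * r - B) \<le> r * (\<mu> * r - B)"
      using y R1 m \<mu> by (intro mult_right_mono) (auto simp: r_def)
    ultimately have rr: "D < r * (\<mu> * r - B)" using \<mu> by auto
    have "- (norm G * r) \<le> G \<bullet> (y - w0)" "- (norm \<xi> * r) \<le> \<xi> \<bullet> (y - w0)"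
      using Cauchy_Schwarz_ineq2[of G "y - w0"] Cauchy_Schwarz_ineq2[of \<xi> "y - w0"]
      by (simp_all add: r_def abs_le_iff)
    then have "F w0 + c0 + \<xi> \<bullet> w0 + r * (\<mu> * r - B)
        \<le> F w0 + G \<bullet> (y - w0) + \<mu> * r^2 + c0 + \<xi> \<bullet> w0 + \<xi> \<bullet> (y - w0)"
      by (simp add: B_def power2_eq_square algebra_simps)
    also have "\<dots> \<le> F y + (c0 + \<xi> \<bullet> y)"
      using growth[of y] inner_diff_right[of \<xi> y w0] by (simp add: r_def)
    finally have "F w0 + hv < F y + (c0 + \<xi> \<bullet> y)" using rr unfolding D_def by linarith
    then have "ereal (F w0) + h w0 < ereal (F y) + ereal (c0 + \<xi> \<bullet> y)" by (simp add: hw0)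
    also have "\<dots> \<le> ereal (F y) + h y" using minorant by (intro add_left_mono)
    finally show ?thesis .
  qed
  with R1 that show ?thesis by blast
qed

text \<open>The minimum is attained on the compact slice of the (closed) epigraph of \<open>h\<close> over the ball
  outside of which the objective exceeds its value at \<open>w0\<close>.\<close>
lemma smooth_plus_convex_has_minimizer:
  fixes F :: "real ^ 'd \<Rightarrow> real"
  assumes contF: "continuous_on UNIV F"
    and epi: "closed {(x, r::real). h x \<le> ereal r}"
    and hw0: "h w0 = ereal hv"
    and minorant: "\<And>y. ereal (c0 + \<xi> \<bullet> y) \<le> h y"
    and growth: "\<And>y. F w0 + G \<bullet> (y - w0) + \<mu> * (norm (y - w0))^2 \<le> F y"
    and \<mu>: "\<mu> > 0"
  obtains z where "\<And>y. ereal (F z) + h z \<le> ereal (F y) + h y"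
proof -
  obtain R where R1: "R \<ge> 1"
    and far: "\<And>y. R < norm (y - w0) \<Longrightarrow> ereal (F w0) + h w0 < ereal (F y) + h y"
    using smooth_plus_convex_exceeds_outside_ball[OF hw0 minorant growth \<mu>] by blast
  define K where "K = cball w0 R"
  have "bounded (F ` K)"
    by (intro compact_imp_bounded compact_continuous_image continuous_on_subset[OF contF])
      (auto simp: K_def)
  then obtain BF where BF: "\<And>y. y \<in> K \<Longrightarrow> \<bar>F y\<bar> \<le> BF" by (auto simp: bounded_iff)
  define lb where "lb = c0 - norm \<xi> * (norm w0 + R)"
  define ub where "ub = F w0 + hv + BF"
  have lbK: "lb \<le> c0 + \<xi> \<bullet> y" if "y \<in> K" for y
  proof -
    have "norm y \<le> norm w0 + norm (y - w0)" using norm_triangle_ineq[of w0 "y - w0"] by simp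
    also have "norm (y - w0) \<le> R" using that by (simp add: K_def dist_norm norm_minus_commute)
    finally have "- (\<xi> \<bullet> y) \<le> norm \<xi> * (norm w0 + R)"
      using Cauchy_Schwarz_ineq2[of \<xi> y] mult_left_mono[of "norm y" _ "norm \<xi>"]
      by (fastforce simp: abs_le_iff)
    then show ?thesis by (simp add: lb_def)
  qed
  define S where "S = {(x, r). h x \<le> ereal r} \<inter> (K \<times> {lb..ub})"
  have in_S: "(y, hy) \<in> S" if "y \<in> K" "h y = ereal hy" "F y + hy \<le> F w0 + hv" for y hy
    using that lbK[of y] minorant[of y] BF[of y] by (auto simp: S_def ub_def)
  have "compact S" unfolding S_def K_def
    by (intro closed_Int_compact epi compact_Times compact_cball compact_Icc)
  moreover have w0S: "(w0, hv) \<in> S" using R1 by (intro in_S) (auto simp: K_def hw0)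
  moreover have "continuous_on S (\<lambda>p. F (fst p) + snd p)"
    by (intro continuous_intros continuous_on_compose2[OF contF]) auto
  ultimately obtain z rz where zS: "(z, rz) \<in> S"
    and zmin: "\<And>p. p \<in> S \<Longrightarrow> F z + rz \<le> F (fst p) + snd p"
    using continuous_attains_inf[of S "\<lambda>p. F (fst p) + snd p"] by fastforce
  have Phiz: "ereal (F z) + h z \<le> ereal (F z + rz)"
    using zS add_left_mono[of "h z" "ereal rz" "ereal (F z)"] by (simp add: S_def)
  have "ereal (F z) + h z \<le> ereal (F y) + h y" for y
  proof (cases "ereal (F y) + h y \<le> ereal (F w0) + h w0")
    case True
    then have yK: "y \<in> K" using far[of y] by (force simp: K_def dist_norm norm_minus_commute)
    have "h y \<noteq> -\<infinity>" using minorant[of y] by auto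
    moreover have "h y \<noteq> \<infinity>" using True by (auto simp: hw0)
    ultimately obtain hy where hy: "h y = ereal hy" by (cases "h y") auto
    have "F z + rz \<le> F y + hy" using zmin[of "(y, hy)"] in_S[OF yK hy] True by (simp add: hy hw0)
    then show ?thesis using Phiz by (simp add: hy) (meson ereal_less_eq(3) order_trans)
  next
    case False
    have "ereal (F z) + h z \<le> ereal (F w0) + h w0"
      using Phiz zmin[OF w0S] by (simp add: hw0) (meson ereal_less_eq(3) order_trans)
    then show ?thesis using False by simp
  qed
  then show ?thesis using that by blast
qed

lemma has_derivative_norm_diff_power2:
  fixes c x :: "'a::real_inner"
  shows "((\<lambda>y. (norm (c - y))\<^sup>2) has_derivative (\<lambda>v. (2 *\<^sub>R (x - c)) \<bullet> v)) (at x)"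
  unfolding power2_norm_eq_inner
  by (rule has_derivative_eq_rhs[OF has_derivative_inner[OF
        has_derivative_diff[OF has_derivative_const has_derivative_ident]
        has_derivative_diff[OF has_derivative_const has_derivative_ident]]])
     (auto simp: fun_eq_iff inner_diff_left inner_diff_right inner_commute algebra_simps)

lemma dist_inf0_le_obtain:
  assumes "dist_inf0 S \<le> ereal e" "e > 0"
  obtains g where "g \<in> S" "infnorm g < 2 * e"
proof -
  have "dist_inf0 S < ereal (2 * e)" using assms by (simp add: le_less_trans)
  then show ?thesis using that unfolding dist_inf0_def INF_less_iff by auto
qed

lemma two_mult_le_young:
  fixes s a y :: real
  assumes "s > 0"
  shows "2 * (a * y) \<le> 2 * (s * y\<^sup>2) + a\<^sup>2 / (2 * s)"
proof -
  have "0 \<le> (2 * s * y - a)\<^sup>2 / (2 * s)" using assms by simp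
  also have "(2 * s * y - a)\<^sup>2 / (2 * s) = 2 * (s * y\<^sup>2) + a\<^sup>2 / (2 * s) - 2 * (a * y)"
    using assms by (simp add: power2_eq_square field_simps)
  finally show ?thesis by simp
qed

lemma inner_three_point_identity:
  fixes a b c e :: "'a::real_inner"
  assumes "r > 0"
  shows "2 * ((a - r *\<^sub>R ((e - (1/r) *\<^sub>R (b - a)) - c)) \<bullet> (e - (1/r) *\<^sub>R (b - a))
            - b \<bullet> e - (b - a) \<bullet> (e - c))
    = (1/r) * (norm a)\<^sup>2 + r * (norm c)\<^sup>2 - (1/r) * (norm b)\<^sup>2 - r * (norm e)\<^sup>2
      - (1/r) * (norm (b - a))\<^sup>2 - r * (norm (e - c))\<^sup>2"
  using assms
  by (simp add: power2_norm_eq_inner inner_diff_left inner_diff_right inner_scaleR_left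
      inner_scaleR_right inner_commute field_simps) (simp add: algebra_simps inner_commute)

lemma power2_mult_power_le:
  fixes c q :: real
  assumes "0 \<le> q" "q \<le> 1"
  shows "(c * q ^ t)\<^sup>2 \<le> c\<^sup>2 * q ^ t"
proof -
  have "q ^ t * q ^ t \<le> q ^ t * 1" using assms by (intro mult_left_mono power_le_one) auto
  then have "c\<^sup>2 * (q ^ t)\<^sup>2 \<le> c\<^sup>2 * q ^ t" by (intro mult_left_mono) (auto simp: power2_eq_square)
  then show ?thesis by (simp add: power_mult_distrib)
qed

text \<open>Young's inequality applied to the error terms \<open>3\<delta>e + 2\<delta>c\<close>; the first is absorbed by
  the strong convexity term \<open>\<sigma>e\<^sup>2\<close>, the second is bounded by \<open>\<delta>(1 + c\<^sup>2)\<close>.\<close>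
lemma young_error_term_bound:
  fixes \<sigma> \<delta> e c K :: real
  assumes "\<sigma> > 0" "\<delta> \<ge> 0" "c\<^sup>2 \<le> K"
  shows "2 * (3 * (\<delta> * e) + 2 * (\<delta> * c)) - 2 * (\<sigma> * e\<^sup>2) \<le> 9 * (\<delta>\<^sup>2 / (2 * \<sigma>)) + 2 * \<delta> + 2 * (\<delta> * K)"
proof -
  have "2 * ((3 * \<delta>) * e) \<le> 2 * (\<sigma> * e\<^sup>2) + (3 * \<delta>)\<^sup>2 / (2 * \<sigma>)"
    by (rule two_mult_le_young[OF assms(1)])
  moreover have "(3 * \<delta>)\<^sup>2 / (2 * \<sigma>) = 9 * (\<delta>\<^sup>2 / (2 * \<sigma>))" by (simp add: power2_eq_square)
  moreover have "0 \<le> (c - 1)\<^sup>2" by simp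
  then have "2 * c \<le> 1 + K" using assms(3) by (simp add: power2_eq_square algebra_simps)
  then have "\<delta> * (2 * c) \<le> \<delta> * (1 + K)" using assms(2) by (intro mult_left_mono) auto
  ultimately show ?thesis by (simp add: algebra_simps)
qed

lemma perturbed_growth_bounded:
  fixes V :: "nat \<Rightarrow> real"
  assumes step: "\<And>t. V (Suc t) \<le> (1 + a * q ^ t) * V t + b * q ^ t"
    and V: "\<And>t. 0 \<le> V t" and a: "a > 0" and b: "b \<ge> 0" and q: "0 < q" "q < 1"
  shows "V t \<le> (V 0 + b / a) * exp (a / (1 - q))"
proof -
  have aux: "V t + b / a \<le> (V 0 + b / a) * exp (a * (\<Sum>s<t. q ^ s))" for t
  proof (induction t)
    case (Suc t)
    have "V (Suc t) + b / a \<le> (1 + a * q ^ t) * V t + b * q ^ t + b / a" using step[of t] by simp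
    also have "\<dots> = (1 + a * q ^ t) * (V t + b / a)" using a by (simp add: field_simps)
    also have "\<dots> \<le> exp (a * q ^ t) * (V t + b / a)"
      using V[of t] a b by (intro mult_right_mono) auto
    also have "\<dots> \<le> exp (a * q ^ t) * ((V 0 + b / a) * exp (a * (\<Sum>s<t. q ^ s)))"
      using Suc.IH by (intro mult_left_mono) auto
    also have "\<dots> = (V 0 + b / a) * exp (a * (\<Sum>s<Suc t. q ^ s))"
      by (simp add: distrib_left exp_add mult_ac)
    finally show ?case .
  qed simp
  have "(\<Sum>s<t. q ^ s) = (1 - q ^ t) / (1 - q)" using q by (simp add: sum_gp_strict)
  also have "\<dots> \<le> 1 / (1 - q)" using q by (intro divide_right_mono) auto
  finally have "a * (\<Sum>s<t. q ^ s) \<le> a * (1 / (1 - q))" using a by (intro mult_left_mono) auto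
  then have "(V 0 + b / a) * exp (a * (\<Sum>s<t. q ^ s)) \<le> (V 0 + b / a) * exp (a / (1 - q))"
    using V[of 0] a b by (intro mult_left_mono) auto
  then show ?thesis using aux[of t] a b by (smt (verit) divide_nonneg_nonneg)
qed

lemma perturbed_contraction_linear_rate:
  fixes V :: "nat \<Rightarrow> real"
  assumes step: "\<And>t. V (Suc t) \<le> \<theta> * V t + e * q ^ t"
    and "0 \<le> \<theta>" "\<theta> < r" "0 < q" "q \<le> r" "0 \<le> e"
  shows "V t \<le> max (V 0) (e / (r - \<theta>)) * r ^ t"
proof (induction t)
  case (Suc t)
  define A where "A = max (V 0) (e / (r - \<theta>))"
  have "V (Suc t) \<le> \<theta> * (A * r ^ t) + e * r ^ t"
    using step[of t] Suc.IH assms mult_left_mono[of "q ^ t" "r ^ t" e] power_mono[of q r t]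
      mult_left_mono[of "V t" "A * r ^ t" \<theta>]
    unfolding A_def by linarith
  also have "e \<le> A * (r - \<theta>)"
    using assms by (simp add: A_def flip: pos_divide_le_eq)
  then have "e * r ^ t \<le> A * (r - \<theta>) * r ^ t" using assms by (intro mult_right_mono) auto
  finally show ?case by (simp add: A_def algebra_simps)
qed simp

lemma geometric_below_threshold:
  fixes D s \<tau> :: real
  assumes D: "1 \<le> D" and s: "0 < s" "s < 1" and \<tau>: "0 < \<tau>" "\<tau> \<le> 1"
  shows "\<exists>t. real (Suc t) \<le> (2 + ln D / - ln s + 1 / - ln s) * (1 + \<bar>ln \<tau>\<bar>) \<and> D * s ^ t \<le> \<tau>"
proof -
  define b where "b = - ln s"
  have b: "b > 0" using s by (simp add: b_def)
  have lnD: "0 \<le> ln D" and ln\<tau>: "\<bar>ln \<tau>\<bar> = - ln \<tau>" using D \<tau> by auto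
  define y where "y = (ln D - ln \<tau>) / b"
  define t where "t = nat \<lceil>y\<rceil>"
  have y: "0 \<le> y" using lnD ln\<tau> b by (simp add: y_def)
  then have ty: "y \<le> real t" "real t \<le> y + 1" by (simp_all add: t_def)
  have "s ^ t = exp (real t * ln s)" using s by (simp add: powr_realpow[symmetric] powr_def)
  then have "D * s ^ t = exp (ln D) * exp (real t * ln s)" using D by simp
  also have "\<dots> = exp (ln D - real t * b)" by (simp add: exp_add[symmetric] b_def)
  also have "\<dots> \<le> exp (ln \<tau>)"
    using mult_right_mono[OF ty(1), of b] b by (simp add: y_def)
  finally have "D * s ^ t \<le> \<tau>" using \<tau> by simp
  moreover have "real (Suc t) \<le> (2 + ln D / b + 1 / b) * (1 + \<bar>ln \<tau>\<bar>)"
  proof -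
    have "real (Suc t) \<le> 2 + ln D / b + \<bar>ln \<tau>\<bar> / b"
      using ty(2) ln\<tau> by (simp add: y_def diff_divide_distrib)
    moreover have "1 / b \<le> 2 + ln D / b + 1 / b" using lnD b by simp
    then have "\<bar>ln \<tau>\<bar> / b \<le> (2 + ln D / b + 1 / b) * \<bar>ln \<tau>\<bar>"
      using mult_right_mono[of "1 / b" _ "\<bar>ln \<tau>\<bar>"] by simp
    moreover have "0 \<le> 1 / b" using b by simp
    moreover have "(2 + ln D / b + 1 / b) * (1 + \<bar>ln \<tau>\<bar>)
        = (2 + ln D / b + 1 / b) + (2 + ln D / b + 1 / b) * \<bar>ln \<tau>\<bar>"
      by (simp add: distrib_left)
    ultimately show ?thesis by linarith
  qed
  ultimately show ?thesis unfolding b_def by blast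
qed

locale alg2_setting =
  fixes n :: nat and P :: "nat \<Rightarrow> real ^ 'd \<Rightarrow> real" and gP :: "nat \<Rightarrow> real ^ 'd \<Rightarrow> real ^ 'd"
    and h :: "real ^ 'd \<Rightarrow> ereal" and \<sigma> q :: real and w0 :: "real ^ 'd" and \<rho> :: "nat \<Rightarrow> real"
  assumes n_ge_1: "n \<ge> 1" and sigma_pos: "\<sigma> > 0"
    and smooth: "\<forall>i\<le>n. smooth_strongly_convex (P i) (gP i) \<sigma>"
    and h_pcc: "proper_closed_convex h" and q_pos: "0 < q" and q_less_1: "q < 1"
    and h_w0: "h w0 \<noteq> \<infinity>"
    and rho_pos_all: "\<forall>i\<in>{1..n}. \<rho> i > 0"
begin

lemma rho_pos: "i \<in> {1..n} \<Longrightarrow> \<rho> i > 0"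
  using rho_pos_all by blast

lemma smooth_strongly_convex_P: "i \<le> n \<Longrightarrow> smooth_strongly_convex (P i) (gP i) \<sigma>"
  using smooth by blast

lemma gradient_monotone: "i \<le> n \<Longrightarrow> \<sigma> * (norm (x - y))\<^sup>2 \<le> (gP i x - gP i y) \<bullet> (x - y)"
  using smooth_strongly_convex_P unfolding smooth_strongly_convex_def by blast

lemma has_derivative_P: "i \<le> n \<Longrightarrow> (P i has_derivative (\<lambda>v. gP i x \<bullet> v)) (at x)"
  using smooth_strongly_convex_P unfolding smooth_strongly_convex_def by blast

text \<open>All residuals of the inexact subproblems are bounded by \<open>err_const * q ^ t\<close> in the
  Euclidean norm: \<open>norm_factor\<close> converts the max-norm tolerances, and the extra factor \<open>2 / q\<close>
  covers the index shift between \<open>\<epsilon>\<^sub>t\<^sub>+\<^sub>1 = q\<^sup>t\<close> and the iterate \<open>t\<close>, and the strict infimum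
  in \<open>dist_inf0\<close>.\<close>
definition "norm_factor = sqrt (real DIM(real ^ 'd))"
definition "err_const = 2 * norm_factor / q"
definition "inv_rho_sum = (\<Sum>i=1..n. 1 / \<rho> i)"

lemma norm_factor_pos: "norm_factor > 0"
  by (simp add: norm_factor_def)

lemma err_const_pos: "err_const > 0"
  using norm_factor_pos q_pos by (simp add: err_const_def)

lemma norm_le_norm_factor_infnorm: "norm (x :: real ^ 'd) \<le> norm_factor * infnorm x"
  using norm_le_infnorm[of x] by (simp add: norm_factor_def)

lemma norm_factor_le_err_const:
  "2 * norm_factor * q ^ t \<le> err_const * q ^ t" "norm_factor * q ^ t \<le> err_const * q ^ Suc t"
proof -
  have "2 * norm_factor \<le> err_const"
    using norm_factor_pos q_pos q_less_1 by (simp add: err_const_def field_simps)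
  then show "2 * norm_factor * q ^ t \<le> err_const * q ^ t" using q_pos by (intro mult_right_mono) auto
  show "norm_factor * q ^ t \<le> err_const * q ^ Suc t"
    using norm_factor_pos q_pos by (simp add: err_const_def)
qed

lemma err_power2_le: "(err_const * q ^ t)\<^sup>2 \<le> err_const\<^sup>2 * q ^ t"
  using q_pos q_less_1 by (intro power2_mult_power_le) auto

lemma inv_rho_le_sum: "i \<in> {1..n} \<Longrightarrow> 1 / \<rho> i \<le> inv_rho_sum"
  unfolding inv_rho_sum_def by (rule member_le_sum) (use rho_pos in \<open>auto simp: less_imp_le\<close>)

lemma inv_rho_sum_pos: "inv_rho_sum > 0"
  using inv_rho_le_sum[of 1] rho_pos[of 1] n_ge_1 by (smt (verit) atLeastAtMost_iff divide_pos_pos le_refl)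

text \<open>Strong convexity makes the objective coercive once \<open>h\<close> has an affine minorant, and the
  sum rule turns minimality into the optimality condition.\<close>
lemma exists_solution:
  assumes minorant: "\<And>y. ereal (c0 + \<xi> \<bullet> y) \<le> h y"
  obtains ws where "- (\<Sum>j\<le>n. gP j ws) \<in> subdiff h ws"
proof -
  define F where "F = (\<lambda>y. \<Sum>j\<le>n. P j y)"
  have dF: "(F has_derivative (\<lambda>v. (\<Sum>j\<le>n. gP j z) \<bullet> v)) (at z)" for z
    unfolding F_def
    by (rule has_derivative_eq_rhs[OF has_derivative_sum[of "{..n}" P "\<lambda>j v. gP j z \<bullet> v"]])
       (auto simp: has_derivative_P inner_sum_left)
  have contF: "continuous_on UNIV F"
    by (rule continuous_at_imp_continuous_on) (use dF has_derivative_continuous in blast)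
  have growth: "F w0 + (\<Sum>j\<le>n. gP j w0) \<bullet> (y - w0) + (\<sigma> / 2) * (norm (y - w0))^2 \<le> F y" for y
  proof -
    have "(\<Sum>j\<le>n. P j w0 + gP j w0 \<bullet> (y - w0) + \<sigma> / 2 * (norm (y - w0))\<^sup>2) \<le> F y"
      unfolding F_def by (intro sum_mono smooth_strongly_convex_quadratic_minorant smooth_strongly_convex_P) auto
    moreover have "1 * (\<sigma> / 2 * (norm (y - w0))\<^sup>2) \<le> real (Suc n) * (\<sigma> / 2 * (norm (y - w0))\<^sup>2)"
      using sigma_pos by (intro mult_right_mono) auto
    ultimately show ?thesis by (simp add: F_def sum.distrib inner_sum_left)
  qed
  obtain hv where hv: "h w0 = ereal hv"
    using h_w0 proper_closed_convex_not_MInfty[OF h_pcc] by (cases "h w0") auto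
  obtain z where zmin: "\<And>y. ereal (F z) + h z \<le> ereal (F y) + h y"
    using smooth_plus_convex_has_minimizer[OF contF proper_closed_convex_closed_epigraph[OF h_pcc]
        hv minorant growth] sigma_pos by auto
  have hz: "h z \<noteq> \<infinity>" using zmin[of w0] by (auto simp: hv)
  have "h z + ereal ((- (\<Sum>j\<le>n. gP j z)) \<bullet> (y - z)) \<le> h y" for y
    using subgradient_of_differentiable_plus_convex[OF h_pcc dF hz, of 0 y] zmin by simp
  with hz that show ?thesis by (auto simp: subdiff_def)
qed

end

locale alg2_trajectory = alg2_setting +
  fixes w :: "nat \<Rightarrow> real ^ 'd" and u lam :: "nat \<Rightarrow> nat \<Rightarrow> real ^ 'd"
  assumes run: "alg2_run n P gP h q w0 \<rho> w u lam"
begin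

definition "u_tilde t i = u i t + (1 / \<rho> i) *\<^sub>R lam i t"

text \<open>For \<open>t > 0\<close>, \<open>residual i t\<close> is \<open>\<nabla>\<phi>\<^sub>i\<^sub>,\<^sub>t\<^sub>-\<^sub>1(u\<^sub>i\<^sup>t)\<close> (the inexactness of the \<open>u\<^sub>i\<close>-update)
  rewritten with the multiplier update; the initialisation makes \<open>residual i 0 = 0\<close>.\<close>
definition "residual i t = gP i (u i t) + lam i t"

lemma run_init: "i \<in> {1..n} \<Longrightarrow> u i 0 = w0" "i \<in> {1..n} \<Longrightarrow> lam i 0 = - gP i w0"
  using run unfolding alg2_run_def by auto

lemma lam_step: "i \<in> {1..n} \<Longrightarrow> lam i (Suc t) = lam i t + \<rho> i *\<^sub>R (u i (Suc t) - w (Suc t))"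
  using run unfolding alg2_run_def by auto

lemma residual_bound:
  assumes i: "i \<in> {1..n}"
  shows "norm (residual i t) \<le> err_const * q ^ t" "norm (residual i (Suc t)) \<le> err_const * q ^ t"
proof -
  have residual_Suc: "norm (residual i (Suc s)) \<le> norm_factor * q ^ s" for s
  proof -
    have "grad_phi (gP i) (\<rho> i) (lam i s) (w (Suc s)) (u i (Suc s)) = residual i (Suc s)"
      by (simp add: grad_phi_def residual_def lam_step[OF i] algebra_simps)
    moreover have "infnorm (grad_phi (gP i) (\<rho> i) (lam i s) (w (Suc s)) (u i (Suc s))) \<le> q ^ s"
      using run i unfolding alg2_run_def by auto
    ultimately have "infnorm (residual i (Suc s)) \<le> q ^ s" by simp
    then show ?thesis
      using norm_le_norm_factor_infnorm[of "residual i (Suc s)"] norm_factor_pos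
        mult_left_mono[of "infnorm (residual i (Suc s))" "q ^ s" norm_factor] by linarith
  qed
  show "norm (residual i (Suc t)) \<le> err_const * q ^ t"
  proof -
    have "0 \<le> norm_factor * q ^ t" using norm_factor_pos q_pos by simp
    then show ?thesis using residual_Suc[of t] norm_factor_le_err_const(1)[of t] by linarith
  qed
  show "norm (residual i t) \<le> err_const * q ^ t"
  proof (cases t)
    case 0 then show ?thesis using err_const_pos by (simp add: residual_def run_init[OF i])
  next
    case (Suc t') then show ?thesis using residual_Suc[of t'] norm_factor_le_err_const(2)[of t'] by simp
  qed
qed

lemma phi0_eq_smooth_part_plus_h:
  "phi0 n P h \<rho> (u_tilde t) y
     = ereal (P 0 y + (\<Sum>i=1..n. \<rho> i / 2 * (norm (u_tilde t i - y))\<^sup>2)) + h y"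
  by (cases "h y") (simp_all add: phi0_def)

lemma has_derivative_phi0_smooth_part:
  "((\<lambda>y. P 0 y + (\<Sum>i=1..n. \<rho> i / 2 * (norm (u_tilde t i - y))\<^sup>2)) has_derivative
     (\<lambda>v. (gP 0 x + (\<Sum>i=1..n. \<rho> i *\<^sub>R (x - u_tilde t i))) \<bullet> v)) (at x)"
  by (rule has_derivative_eq_rhs[OF has_derivative_add[OF has_derivative_P
        has_derivative_sum[OF has_derivative_mult_right[OF has_derivative_norm_diff_power2]]]])
     (auto simp: fun_eq_iff inner_add_left inner_sum_left)

lemma w_step_approx_optimal:
  obtains g where "norm g \<le> err_const * q ^ t"
    and "g - gP 0 (w (Suc t)) - (\<Sum>i=1..n. \<rho> i *\<^sub>R (w (Suc t) - u_tilde t i)) \<in> subdiff h (w (Suc t))"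
proof -
  let ?x = "w (Suc t)"
  have "dist_inf0 (subdiff (phi0 n P h \<rho> (u_tilde t)) ?x) \<le> ereal (q ^ t)"
    using run unfolding alg2_run_def u_tilde_def by auto
  moreover have "q ^ t > 0" using q_pos by simp
  ultimately obtain g where g: "g \<in> subdiff (phi0 n P h \<rho> (u_tilde t)) ?x" and gi: "infnorm g < 2 * q ^ t"
    by (rule dist_inf0_le_obtain)
  have "norm g \<le> norm_factor * (2 * q ^ t)"
    using norm_le_norm_factor_infnorm[of g] gi norm_factor_pos
      mult_left_mono[of "infnorm g" "2 * q ^ t" norm_factor] by linarith
  then have ng: "norm g \<le> err_const * q ^ t" using norm_factor_le_err_const(1)[of t] by simp
  have hx: "h ?x \<noteq> \<infinity>" and sub: "\<And>y. ereal (P 0 ?x + (\<Sum>i=1..n. \<rho> i / 2 * (norm (u_tilde t i - ?x))\<^sup>2)) + h ?x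
      + ereal (g \<bullet> (y - ?x)) \<le> ereal (P 0 y + (\<Sum>i=1..n. \<rho> i / 2 * (norm (u_tilde t i - y))\<^sup>2)) + h y"
    using g unfolding subdiff_def phi0_eq_smooth_part_plus_h by auto
  have "h ?x + ereal ((g - (gP 0 ?x + (\<Sum>i=1..n. \<rho> i *\<^sub>R (?x - u_tilde t i)))) \<bullet> (y - ?x)) \<le> h y" for y
    by (rule subgradient_of_differentiable_plus_convex[OF h_pcc has_derivative_phi0_smooth_part hx sub])
  then show ?thesis using that ng hx by (simp add: subdiff_def diff_diff_eq)
qed

text \<open>Any subgradient provides an affine minorant of \<open>h\<close>; this is where a run is needed to
  show that the problem has a solution.\<close>
lemma h_affine_minorant: obtains c0 \<xi> where "\<And>y. ereal (c0 + \<xi> \<bullet> y) \<le> h y"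
proof -
  obtain \<xi> where "\<xi> \<in> subdiff h (w (Suc 0))"
    using w_step_approx_optimal[of 0] by metis
  then have hx: "h (w (Suc 0)) \<noteq> \<infinity>" and sub: "\<And>y. h (w (Suc 0)) + ereal (\<xi> \<bullet> (y - w (Suc 0))) \<le> h y"
    by (auto simp: subdiff_def)
  obtain hx1 where hx1: "h (w (Suc 0)) = ereal hx1"
    using hx proper_closed_convex_not_MInfty[OF h_pcc] by (cases "h (w (Suc 0))") auto
  have "ereal ((hx1 - \<xi> \<bullet> w (Suc 0)) + \<xi> \<bullet> y) \<le> h y" for y
    using sub[of y] by (simp add: hx1 inner_diff_right algebra_simps)
  then show ?thesis using that by blast
qed

end

locale alg2_solution = alg2_setting +
  fixes ws :: "real ^ 'd"
  assumes optimal: "- (\<Sum>j\<le>n. gP j ws) \<in> subdiff h ws"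
begin

definition "lam_opt i = - gP i ws"

definition "lyap_init =
  (\<Sum>i=1..n. (1 / \<rho> i) * (norm (- gP i w0 - lam_opt i))\<^sup>2 + \<rho> i * (norm (w0 - ws))\<^sup>2)"

text \<open>\<open>growth_a\<close> and \<open>growth_b\<close> enter the crude
  recursion for the Lyapunov function, which is therefore bounded by \<open>lyap_bound\<close>; every
  iterate then lies in the ball of radius \<open>radius\<close> around \<open>ws\<close>, where the gradients have the
  common Lipschitz constant \<open>lip\<close> (at \<open>ws\<close>). With it, the contraction factor
  \<open>\<kappa> / (\<kappa> + 2\<sigma>)\<close> and the perturbation \<open>perturb * q\<^sup>t\<close> give the rate \<open>rate\<close>.\<close>
definition "growth_a = 2 * real n * err_const * inv_rho_sum"
definition "growth_b = err_const\<^sup>2 * (1 + 9 * real n) / (2 * \<sigma>) + 2 * real n * err_const"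
definition "lyap_bound = (lyap_init + growth_b / growth_a) * exp (growth_a / (1 - q))"
definition "radius = 3 * sqrt (lyap_bound * inv_rho_sum) + 1"
definition "lip = (SOME L. L \<ge> 0 \<and> (\<forall>i\<le>n. \<forall>z. norm (z - ws) \<le> radius \<longrightarrow>
                                   norm (gP i z - gP i ws) \<le> L * norm (z - ws)))"
definition "kappa = (\<Sum>i=1..n. 2 * lip\<^sup>2 / \<rho> i + \<rho> i)"
definition "contraction = kappa / (kappa + 2 * \<sigma>)"
definition "perturb =
  2 * err_const * radius * (1 + 5 * real n) + 4 * \<sigma> * err_const\<^sup>2 * inv_rho_sum / kappa"
definition "rate = (1 + max contraction q) / 2"
definition "rate_const = max lyap_init (perturb / (rate - contraction))"
definition "eps_const =
  1 + (\<Sum>i=1..n. (lip + \<rho> i) * (4 * sqrt (rate_const * inv_rho_sum)) + err_const)"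
definition "iter_const = 2 + ln eps_const / - ln (sqrt rate) + 1 / - ln (sqrt rate)"

lemma lip_calm:
  "lip \<ge> 0"
  "i \<le> n \<Longrightarrow> norm (z - ws) \<le> radius \<Longrightarrow> norm (gP i z - gP i ws) \<le> lip * norm (z - ws)"
proof -
  have "\<forall>i. \<exists>L. i \<le> n \<longrightarrow> L \<ge> 0 \<and>
      (\<forall>z. norm (z - ws) \<le> radius \<longrightarrow> norm (gP i z - gP i ws) \<le> L * norm (z - ws))"
    using smooth_strongly_convex_gradient_calm[OF smooth_strongly_convex_P] by metis
  then obtain f where f: "\<And>i. i \<le> n \<Longrightarrow> f i \<ge> 0 \<and>
      (\<forall>z. norm (z - ws) \<le> radius \<longrightarrow> norm (gP i z - gP i ws) \<le> f i * norm (z - ws))"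
    by metis
  have "(\<Sum>i\<le>n. f i) \<ge> 0 \<and> (\<forall>i\<le>n. \<forall>z. norm (z - ws) \<le> radius \<longrightarrow>
      norm (gP i z - gP i ws) \<le> (\<Sum>i\<le>n. f i) * norm (z - ws))"
  proof (intro conjI allI impI)
    show "(\<Sum>i\<le>n. f i) \<ge> 0" using f by (auto intro: sum_nonneg)
    fix i z assume i: "i \<le> n" and z: "norm (z - ws) \<le> radius"
    have "f i \<le> (\<Sum>i\<le>n. f i)" by (rule member_le_sum) (use i f in auto)
    then have "f i * norm (z - ws) \<le> (\<Sum>i\<le>n. f i) * norm (z - ws)" by (intro mult_right_mono) auto
    then show "norm (gP i z - gP i ws) \<le> (\<Sum>i\<le>n. f i) * norm (z - ws)" using f i z by (meson order_trans)
  qed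
  then have "lip \<ge> 0 \<and> (\<forall>i\<le>n. \<forall>z. norm (z - ws) \<le> radius \<longrightarrow>
      norm (gP i z - gP i ws) \<le> lip * norm (z - ws))"
    unfolding lip_def by (rule someI)
  then show "lip \<ge> 0" "i \<le> n \<Longrightarrow> norm (z - ws) \<le> radius \<Longrightarrow> norm (gP i z - gP i ws) \<le> lip * norm (z - ws)"
    by auto
qed

lemma kappa_term_pos: "i \<in> {1..n} \<Longrightarrow> 0 < 2 * lip\<^sup>2 / \<rho> i + \<rho> i"
  using rho_pos[of i] by (simp add: add_nonneg_pos)

lemma kappa_pos: "kappa > 0"
  unfolding kappa_def using n_ge_1 kappa_term_pos by (intro sum_pos) auto

lemma kappa_term_le: "i \<in> {1..n} \<Longrightarrow> 2 * lip\<^sup>2 / \<rho> i + \<rho> i \<le> kappa"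
  unfolding kappa_def by (rule member_le_sum) (use kappa_term_pos in \<open>auto intro: less_imp_le\<close>)

lemma contraction_bounds: "0 \<le> contraction" "contraction < 1"
  using kappa_pos sigma_pos by (auto simp: contraction_def)

lemma rate_bounds: "contraction < rate" "q < rate" "rate < 1" "0 < rate"
  using contraction_bounds q_pos q_less_1 by (auto simp: rate_def)

lemma sqrt_rate_bounds: "0 < sqrt rate" "sqrt rate < 1" "q \<le> sqrt rate"
proof -
  show "0 < sqrt rate" "sqrt rate < 1" using rate_bounds by auto
  have "rate = sqrt rate * sqrt rate" using rate_bounds by simp
  also have "\<dots> \<le> sqrt rate * 1" using rate_bounds by (intro mult_left_mono) auto
  finally show "q \<le> sqrt rate" using rate_bounds by simp
qed

lemma lyap_init_nonneg: "lyap_init \<ge> 0"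
  unfolding lyap_init_def
proof (intro sum_nonneg)
  fix i assume "i \<in> {1..n}"
  then show "0 \<le> 1 / \<rho> i * (norm (- gP i w0 - lam_opt i))\<^sup>2 + \<rho> i * (norm (w0 - ws))\<^sup>2"
    using rho_pos[of i] by simp
qed

lemma growth_a_pos: "growth_a > 0"
  using n_ge_1 err_const_pos inv_rho_sum_pos by (simp add: growth_a_def)

lemma growth_b_nonneg: "growth_b \<ge> 0"
  using err_const_pos sigma_pos by (simp add: growth_b_def)

lemma lyap_bound_nonneg: "lyap_bound \<ge> 0"
  using lyap_init_nonneg growth_a_pos growth_b_nonneg by (simp add: lyap_bound_def)

lemma radius_nonneg: "radius \<ge> 0"
  using lyap_bound_nonneg inv_rho_sum_pos by (simp add: radius_def)

lemma perturb_nonneg: "perturb \<ge> 0"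
  using err_const_pos sigma_pos inv_rho_sum_pos kappa_pos radius_nonneg by (simp add: perturb_def)

lemma rate_const_nonneg: "rate_const \<ge> 0"
  using lyap_init_nonneg by (simp add: rate_const_def)

lemma eps_const_ge_1: "eps_const \<ge> 1"
proof -
  have "0 \<le> (lip + \<rho> i) * (4 * sqrt (rate_const * inv_rho_sum)) + err_const" if "i \<in> {1..n}" for i
    using rho_pos[OF that] lip_calm(1) rate_const_nonneg inv_rho_sum_pos err_const_pos by simp
  then show ?thesis unfolding eps_const_def by (smt (verit) sum_nonneg)
qed

lemma iter_const_pos: "iter_const > 0"
proof -
  have b: "- ln (sqrt rate) > 0" using sqrt_rate_bounds by simp
  have "ln eps_const \<ge> 0" using eps_const_ge_1 by simp
  then have "ln eps_const / - ln (sqrt rate) \<ge> 0" using b by (rule divide_nonneg_pos)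
  moreover have "1 / - ln (sqrt rate) \<ge> 0" using b by simp
  ultimately show ?thesis unfolding iter_const_def by linarith
qed

end

locale alg2_convergence = alg2_solution + alg2_trajectory
begin

definition "lyap t =
  (\<Sum>i=1..n. (1 / \<rho> i) * (norm (lam i t - lam_opt i))\<^sup>2 + \<rho> i * (norm (u i t - ws))\<^sup>2)"

lemma lyap_nonneg: "lyap t \<ge> 0"
  unfolding lyap_def
proof (intro sum_nonneg)
  fix i assume "i \<in> {1..n}"
  then show "0 \<le> 1 / \<rho> i * (norm (lam i t - lam_opt i))\<^sup>2 + \<rho> i * (norm (u i t - ws))\<^sup>2"
    using rho_pos[of i] by simp
qed

lemma lyap_0: "lyap 0 = lyap_init"
  unfolding lyap_def lyap_init_def by (rule sum.cong) (auto simp: run_init)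

lemma lyap_terms_le:
  assumes i: "i \<in> {1..n}"
  shows "\<rho> i * (norm (u i t - ws))\<^sup>2 \<le> lyap t" "(1 / \<rho> i) * (norm (lam i t - lam_opt i))\<^sup>2 \<le> lyap t"
proof -
  have nonneg: "0 \<le> (1 / \<rho> j) * (norm (lam j t - lam_opt j))\<^sup>2" "0 \<le> \<rho> j * (norm (u j t - ws))\<^sup>2"
    if "j \<in> {1..n}" for j
    using rho_pos[OF that] by auto
  have "(1 / \<rho> i) * (norm (lam i t - lam_opt i))\<^sup>2 + \<rho> i * (norm (u i t - ws))\<^sup>2 \<le> lyap t"
    unfolding lyap_def using i nonneg by (intro member_le_sum) (auto intro: add_nonneg_nonneg)
  then show "\<rho> i * (norm (u i t - ws))\<^sup>2 \<le> lyap t" "(1 / \<rho> i) * (norm (lam i t - lam_opt i))\<^sup>2 \<le> lyap t"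
    using nonneg[OF i] by linarith+
qed

lemma dist_u_power2_le: assumes i: "i \<in> {1..n}" shows "(norm (u i t - ws))\<^sup>2 \<le> lyap t * inv_rho_sum"
proof -
  have "(norm (u i t - ws))\<^sup>2 \<le> lyap t * (1 / \<rho> i)"
    using lyap_terms_le(1)[OF i, of t] rho_pos[OF i] by (simp add: pos_le_divide_eq mult.commute)
  also have "\<dots> \<le> lyap t * inv_rho_sum"
    using inv_rho_le_sum[OF i] lyap_nonneg[of t] by (intro mult_left_mono) auto
  finally show ?thesis .
qed

lemma dist_u_le: "i \<in> {1..n} \<Longrightarrow> norm (u i t - ws) \<le> sqrt (lyap t * inv_rho_sum)"
  using dist_u_power2_le by (intro real_le_rsqrt) auto

lemma dist_lam_le:
  assumes i: "i \<in> {1..n}"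
  shows "norm (lam i t - lam_opt i) / \<rho> i \<le> sqrt (lyap t * inv_rho_sum)"
proof (rule real_le_rsqrt)
  have r: "\<rho> i > 0" using rho_pos[OF i] .
  have "(norm (lam i t - lam_opt i) / \<rho> i)\<^sup>2 = (1 / \<rho> i) * ((1 / \<rho> i) * (norm (lam i t - lam_opt i))\<^sup>2)"
    by (simp add: power_divide power2_eq_square)
  also have "\<dots> \<le> (1 / \<rho> i) * lyap t" using lyap_terms_le(2)[OF i, of t] r by (intro mult_left_mono) auto
  also have "\<dots> \<le> inv_rho_sum * lyap t" using inv_rho_le_sum[OF i] lyap_nonneg[of t] by (intro mult_right_mono) auto
  finally show "(norm (lam i t - lam_opt i) / \<rho> i)\<^sup>2 \<le> lyap t * inv_rho_sum" by (simp add: mult.commute)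
qed

text \<open>\<open>w\<^sup>t\<^sup>+\<^sup>1 = u\<^sub>1\<^sup>t\<^sup>+\<^sup>1 - (\<lambda>\<^sub>1\<^sup>t\<^sup>+\<^sup>1 - \<lambda>\<^sub>1\<^sup>t) / \<rho>\<^sub>1\<close> by the multiplier update, so \<open>w\<close> is controlled
  by \<open>lyap\<close> as well.\<close>
lemma dist_w_le:
  "norm (w (Suc t) - ws) \<le> 2 * sqrt (lyap (Suc t) * inv_rho_sum) + sqrt (lyap t * inv_rho_sum)"
proof -
  have i: "1 \<in> {1..n}" using n_ge_1 by simp
  have r: "\<rho> 1 > 0" using rho_pos[OF i] .
  have "(1 / \<rho> 1) *\<^sub>R (lam 1 (Suc t) - lam 1 t) = u 1 (Suc t) - w (Suc t)"
    using lam_step[OF i, of t] r by simp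
  then have "w (Suc t) - ws
      = (u 1 (Suc t) - ws) - (1 / \<rho> 1) *\<^sub>R ((lam 1 (Suc t) - lam_opt 1) - (lam 1 t - lam_opt 1))"
    by (simp add: algebra_simps)
  then have "norm (w (Suc t) - ws) \<le> norm (u 1 (Suc t) - ws)
      + norm ((1 / \<rho> 1) *\<^sub>R ((lam 1 (Suc t) - lam_opt 1) - (lam 1 t - lam_opt 1)))"
    by (metis norm_triangle_ineq4)
  also have "norm ((1 / \<rho> 1) *\<^sub>R ((lam 1 (Suc t) - lam_opt 1) - (lam 1 t - lam_opt 1)))
      = norm ((lam 1 (Suc t) - lam_opt 1) - (lam 1 t - lam_opt 1)) / \<rho> 1"
    using r by simp
  also have "\<dots> \<le> (norm (lam 1 (Suc t) - lam_opt 1) + norm (lam 1 t - lam_opt 1)) / \<rho> 1"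
    using r by (intro divide_right_mono norm_triangle_ineq4) auto
  also have "\<dots> = norm (lam 1 (Suc t) - lam_opt 1) / \<rho> 1 + norm (lam 1 t - lam_opt 1) / \<rho> 1"
    by (simp add: add_divide_distrib)
  finally show ?thesis
    using dist_u_le[OF i, of "Suc t"] dist_lam_le[OF i, of "Suc t"] dist_lam_le[OF i, of t] by linarith
qed

end

context alg2_convergence
begin

definition "coupling i t = ((lam i t - lam_opt i) - \<rho> i *\<^sub>R (w (Suc t) - u i t)) \<bullet> (w (Suc t) - ws)"

definition "residual_error i t = residual i (Suc t) \<bullet> (u i (Suc t) - ws)
  + (u i (Suc t) - u i t) \<bullet> (residual i (Suc t) - residual i t)"

text \<open>Monotonicity of \<open>\<partial>h\<close> between \<open>w\<^sup>t\<^sup>+\<^sup>1\<close> and \<open>ws\<close>, plus strong monotonicity of \<open>\<nabla>P\<^sub>0\<close>.\<close>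
lemma w_step_descent:
  assumes sub: "g - gP 0 (w (Suc t)) - (\<Sum>i=1..n. \<rho> i *\<^sub>R (w (Suc t) - u_tilde t i)) \<in> subdiff h (w (Suc t))"
  shows "\<sigma> * (norm (w (Suc t) - ws))\<^sup>2 \<le> g \<bullet> (w (Suc t) - ws) + (\<Sum>i=1..n. coupling i t)"
proof -
  define x where "x = w (Suc t)"
  define \<xi> where "\<xi> = g - gP 0 x - (\<Sum>i=1..n. \<rho> i *\<^sub>R (x - u_tilde t i))"
  define \<xi>s where "\<xi>s = - (\<Sum>j\<le>n. gP j ws)"
  have "0 \<le> (\<xi> - \<xi>s) \<bullet> (x - ws)"
  proof -
    have hx: "h x \<noteq> \<infinity>" and 2: "h x + ereal (\<xi> \<bullet> (ws - x)) \<le> h ws"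
      using sub unfolding subdiff_def \<xi>_def x_def by auto
    have hws: "h ws \<noteq> \<infinity>" and 1: "h ws + ereal (\<xi>s \<bullet> (x - ws)) \<le> h x"
      using optimal unfolding subdiff_def \<xi>s_def by auto
    obtain hx' where hx': "h x = ereal hx'"
      using hx proper_closed_convex_not_MInfty[OF h_pcc] by (cases "h x") auto
    obtain hs where hs: "h ws = ereal hs"
      using hws proper_closed_convex_not_MInfty[OF h_pcc] by (cases "h ws") auto
    have "\<xi> \<bullet> (ws - x) = - (\<xi> \<bullet> (x - ws))" by (simp add: inner_diff_right)
    with 1 2 show ?thesis by (simp add: hx' hs inner_diff_left)
  qed
  moreover have "\<sigma> * (norm (x - ws))\<^sup>2 \<le> (gP 0 x - gP 0 ws) \<bullet> (x - ws)"
    by (rule gradient_monotone) simp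
  moreover have "\<xi> - \<xi>s + (gP 0 x - gP 0 ws) = g + (\<Sum>i=1..n. (lam i t - lam_opt i) - \<rho> i *\<^sub>R (x - u i t))"
  proof -
    have "{..n} = insert 0 {1..n}" by auto
    then have "(\<Sum>j\<le>n. gP j ws) = gP 0 ws + (\<Sum>i=1..n. gP i ws)" by simp
    moreover have "(\<Sum>i=1..n. \<rho> i *\<^sub>R (x - u_tilde t i)) = (\<Sum>i=1..n. \<rho> i *\<^sub>R (x - u i t) - lam i t)"
    proof (rule sum.cong[OF refl])
      fix i assume "i \<in> {1..n}"
      then have "\<rho> i \<noteq> 0" using rho_pos by force
      then show "\<rho> i *\<^sub>R (x - u_tilde t i) = \<rho> i *\<^sub>R (x - u i t) - lam i t"
        by (simp add: u_tilde_def algebra_simps)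
    qed
    ultimately show ?thesis unfolding \<xi>_def \<xi>s_def lam_opt_def
      by (simp add: sum.distrib sum_subtractf algebra_simps)
  qed
  then have "(\<xi> - \<xi>s + (gP 0 x - gP 0 ws)) \<bullet> (x - ws) = g \<bullet> (x - ws) + (\<Sum>i=1..n. coupling i t)"
    by (simp add: coupling_def x_def inner_add_left inner_sum_left)
  moreover have "(\<xi> - \<xi>s + (gP 0 x - gP 0 ws)) \<bullet> (x - ws)
      = (\<xi> - \<xi>s) \<bullet> (x - ws) + (gP 0 x - gP 0 ws) \<bullet> (x - ws)"
    by (simp add: inner_add_left)
  ultimately show ?thesis by (simp add: x_def)
qed

text \<open>The multiplier update turns \<open>coupling\<close> into differences of squared norms
  (\<open>inner_three_point_identity\<close>); strong monotonicity of \<open>\<nabla>P\<^sub>i\<close> at \<open>(u\<^sub>i\<^sup>t\<^sup>+\<^sup>1, ws)\<close> and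
  \<open>(u\<^sub>i\<^sup>t\<^sup>+\<^sup>1, u\<^sub>i\<^sup>t)\<close> controls the remaining inner products.\<close>
lemma u_step_descent:
  assumes i: "i \<in> {1..n}"
  shows "(1 / \<rho> i) * (norm (lam i (Suc t) - lam_opt i))\<^sup>2 + \<rho> i * (norm (u i (Suc t) - ws))\<^sup>2
           + 2 * \<sigma> * (norm (u i (Suc t) - ws))\<^sup>2
         \<le> (1 / \<rho> i) * (norm (lam i t - lam_opt i))\<^sup>2 + \<rho> i * (norm (u i t - ws))\<^sup>2
           - 2 * coupling i t + 2 * residual_error i t"
proof -
  have r: "\<rho> i > 0" using rho_pos[OF i] .
  define a where "a = lam i t - lam_opt i"
  define b where "b = lam i (Suc t) - lam_opt i"
  define c where "c = u i t - ws"
  define e where "e = u i (Suc t) - ws"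
  have "(1 / \<rho> i) *\<^sub>R (b - a) = u i (Suc t) - w (Suc t)"
    using lam_step[OF i, of t] r by (simp add: a_def b_def)
  then have xw: "w (Suc t) - ws = e - (1 / \<rho> i) *\<^sub>R (b - a)"
    and xu: "w (Suc t) - u i t = (e - (1 / \<rho> i) *\<^sub>R (b - a)) - c"
    by (simp_all add: e_def c_def algebra_simps)
  have "2 * (coupling i t - b \<bullet> e - (b - a) \<bullet> (e - c)) = (1/\<rho> i) * (norm a)\<^sup>2 + \<rho> i * (norm c)\<^sup>2
      - (1/\<rho> i) * (norm b)\<^sup>2 - \<rho> i * (norm e)\<^sup>2 - (1/\<rho> i) * (norm (b - a))\<^sup>2 - \<rho> i * (norm (e - c))\<^sup>2"
    unfolding coupling_def a_def[symmetric] xu xw by (rule inner_three_point_identity[OF r])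
  moreover have "\<sigma> * (norm e)\<^sup>2 \<le> (residual i (Suc t) - b) \<bullet> e"
    using gradient_monotone[of i "u i (Suc t)" ws] i
    by (simp add: e_def b_def residual_def lam_opt_def algebra_simps)
  moreover have "\<sigma> * (norm (e - c))\<^sup>2 \<le> ((residual i (Suc t) - residual i t) - (b - a)) \<bullet> (e - c)"
    using gradient_monotone[of i "u i (Suc t)" "u i t"] i
    by (simp add: e_def c_def a_def b_def residual_def algebra_simps)
  moreover have "0 \<le> \<sigma> * (norm (e - c))\<^sup>2" "0 \<le> (1/\<rho> i) * (norm (b - a))\<^sup>2" "0 \<le> \<rho> i * (norm (e - c))\<^sup>2"
    using sigma_pos r by auto
  moreover have "residual_error i t = residual i (Suc t) \<bullet> e + (residual i (Suc t) - residual i t) \<bullet> (e - c)"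
    unfolding residual_error_def by (simp add: e_def c_def inner_commute)
  ultimately show ?thesis unfolding a_def b_def c_def e_def
    by (simp add: inner_diff_left algebra_simps)
qed

end

context alg2_convergence
begin

lemma residual_error_le:
  assumes i: "i \<in> {1..n}"
  shows "residual_error i t \<le> 3 * (err_const * q ^ t * norm (u i (Suc t) - ws))
                              + 2 * (err_const * q ^ t * norm (u i t - ws))"
proof -
  define \<delta> where "\<delta> = err_const * q ^ t"
  have "residual i (Suc t) \<bullet> (u i (Suc t) - ws) \<le> norm (residual i (Suc t)) * norm (u i (Suc t) - ws)"
    by (rule norm_cauchy_schwarz)
  also have "\<dots> \<le> \<delta> * norm (u i (Suc t) - ws)"
    using residual_bound(2)[OF i, of t] by (intro mult_right_mono) (auto simp: \<delta>_def)
  finally have a: "residual i (Suc t) \<bullet> (u i (Suc t) - ws) \<le> \<delta> * norm (u i (Suc t) - ws)" .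
  have "norm (u i (Suc t) - u i t) \<le> norm (u i (Suc t) - ws) + norm (u i t - ws)"
    using norm_triangle_ineq4[of "u i (Suc t) - ws" "u i t - ws"] by simp
  moreover have "norm (residual i (Suc t) - residual i t) \<le> 2 * \<delta>"
    using norm_triangle_ineq4[of "residual i (Suc t)" "residual i t"] residual_bound[OF i, of t]
    unfolding \<delta>_def by linarith
  ultimately have "(u i (Suc t) - u i t) \<bullet> (residual i (Suc t) - residual i t)
      \<le> (norm (u i (Suc t) - ws) + norm (u i t - ws)) * (2 * \<delta>)"
    using norm_cauchy_schwarz[of "u i (Suc t) - u i t" "residual i (Suc t) - residual i t"]
      mult_mono[of "norm (u i (Suc t) - u i t)" _ "norm (residual i (Suc t) - residual i t)" "2 * \<delta>"]
    by force
  with a show ?thesis unfolding residual_error_def \<delta>_def by (simp add: algebra_simps)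
qed

lemma lyap_descent:
  "lyap (Suc t) + 2 * \<sigma> * ((norm (w (Suc t) - ws))\<^sup>2 + (\<Sum>i=1..n. (norm (u i (Suc t) - ws))\<^sup>2))
   \<le> lyap t + 2 * (err_const * q ^ t * norm (w (Suc t) - ws)
       + (\<Sum>i=1..n. 3 * (err_const * q ^ t * norm (u i (Suc t) - ws))
                    + 2 * (err_const * q ^ t * norm (u i t - ws))))"
  (is "_ + 2 * \<sigma> * (?D + ?X) \<le> _ + 2 * (?G + ?R)")
proof -
  obtain g where g: "norm g \<le> err_const * q ^ t"
    and sub: "g - gP 0 (w (Suc t)) - (\<Sum>i=1..n. \<rho> i *\<^sub>R (w (Suc t) - u_tilde t i)) \<in> subdiff h (w (Suc t))"
    by (rule w_step_approx_optimal)
  have "g \<bullet> (w (Suc t) - ws) \<le> norm g * norm (w (Suc t) - ws)" by (rule norm_cauchy_schwarz)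
  also have "\<dots> \<le> ?G" using g by (intro mult_right_mono) auto
  finally have w_part: "\<sigma> * ?D \<le> ?G + (\<Sum>i=1..n. coupling i t)"
    using w_step_descent[OF sub] by linarith
  have "(\<Sum>i=1..n. (1 / \<rho> i) * (norm (lam i (Suc t) - lam_opt i))\<^sup>2 + \<rho> i * (norm (u i (Suc t) - ws))\<^sup>2
         + 2 * \<sigma> * (norm (u i (Suc t) - ws))\<^sup>2)
      \<le> (\<Sum>i=1..n. (1 / \<rho> i) * (norm (lam i t - lam_opt i))\<^sup>2 + \<rho> i * (norm (u i t - ws))\<^sup>2
         + (- 2 * coupling i t + 2 * residual_error i t))"
    using u_step_descent by (intro sum_mono) (simp add: algebra_simps)
  then have u_part: "lyap (Suc t) + 2 * \<sigma> * ?X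
      \<le> lyap t - 2 * (\<Sum>i=1..n. coupling i t) + 2 * (\<Sum>i=1..n. residual_error i t)"
    by (simp add: lyap_def sum.distrib sum_subtractf sum_distrib_left)
  have "(\<Sum>i=1..n. residual_error i t) \<le> ?R"
    by (rule sum_mono) (rule residual_error_le)
  with w_part u_part show ?thesis by (simp add: algebra_simps)
qed

end

context alg2_convergence
begin

lemma lyap_growth_step: "lyap (Suc t) \<le> (1 + growth_a * q ^ t) * lyap t + growth_b * q ^ t"
proof -
  define \<delta> where "\<delta> = err_const * q ^ t"
  define D where "D = norm (w (Suc t) - ws)"
  define e where "e i = norm (u i (Suc t) - ws)" for i
  define c where "c i = norm (u i t - ws)" for i
  define K where "K = lyap t * inv_rho_sum"
  have \<delta>0: "0 \<le> \<delta>" using err_const_pos q_pos by (simp add: \<delta>_def)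
  have descent: "lyap (Suc t) + (2 * (\<sigma> * D\<^sup>2) + (\<Sum>i=1..n. 2 * (\<sigma> * (e i)\<^sup>2)))
      \<le> lyap t + (2 * (\<delta> * D) + (\<Sum>i=1..n. 2 * (3 * (\<delta> * e i) + 2 * (\<delta> * c i))))"
    using lyap_descent[of t] unfolding \<delta>_def D_def e_def c_def
    by (simp only: distrib_left sum_distrib_left mult.assoc)
  have "2 * (\<delta> * D) \<le> 2 * (\<sigma> * D\<^sup>2) + \<delta>\<^sup>2 / (2 * \<sigma>)"
    by (rule two_mult_le_young[OF sigma_pos])
  moreover have "(\<Sum>i=1..n. 2 * (3 * (\<delta> * e i) + 2 * (\<delta> * c i)) - 2 * (\<sigma> * (e i)\<^sup>2))
      \<le> (\<Sum>i=1..n. 9 * (\<delta>\<^sup>2 / (2 * \<sigma>)) + 2 * \<delta> + 2 * (\<delta> * K))"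
    unfolding c_def K_def
    by (intro sum_mono young_error_term_bound[OF sigma_pos \<delta>0 dist_u_power2_le]) simp
  moreover have "(\<Sum>i=1..n. 2 * (3 * (\<delta> * e i) + 2 * (\<delta> * c i)) - 2 * (\<sigma> * (e i)\<^sup>2))
      = (\<Sum>i=1..n. 2 * (3 * (\<delta> * e i) + 2 * (\<delta> * c i))) - (\<Sum>i=1..n. 2 * (\<sigma> * (e i)\<^sup>2))"
    by (rule sum_subtractf)
  moreover have "(\<Sum>i=1..n. 9 * (\<delta>\<^sup>2 / (2 * \<sigma>)) + 2 * \<delta> + 2 * (\<delta> * K))
      = real n * (9 * (\<delta>\<^sup>2 / (2 * \<sigma>)) + 2 * \<delta> + 2 * (\<delta> * K))" by simp
  moreover have "\<delta>\<^sup>2 / (2 * \<sigma>) + real n * (9 * (\<delta>\<^sup>2 / (2 * \<sigma>)) + 2 * \<delta> + 2 * (\<delta> * K))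
      = (1 + 9 * real n) * (\<delta>\<^sup>2 / (2 * \<sigma>)) + 2 * real n * \<delta> + 2 * real n * (\<delta> * K)"
    by (simp add: algebra_simps add_divide_distrib)
  ultimately have "lyap (Suc t) \<le> lyap t + (1 + 9 * real n) * (\<delta>\<^sup>2 / (2 * \<sigma>)) + 2 * real n * \<delta> + 2 * real n * (\<delta> * K)"
    using descent by linarith
  also have "(1 + 9 * real n) * (\<delta>\<^sup>2 / (2 * \<sigma>)) \<le> (1 + 9 * real n) * (err_const\<^sup>2 * q ^ t / (2 * \<sigma>))"
    using err_power2_le[of t] sigma_pos by (intro mult_left_mono divide_right_mono) (auto simp: \<delta>_def)
  also have "lyap t + (1 + 9 * real n) * (err_const\<^sup>2 * q ^ t / (2 * \<sigma>)) + 2 * real n * \<delta> + 2 * real n * (\<delta> * K)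
      = (1 + growth_a * q ^ t) * lyap t + growth_b * q ^ t"
    using sigma_pos by (simp add: growth_a_def growth_b_def \<delta>_def K_def field_simps)
  finally show ?thesis by simp
qed

lemma lyap_le_lyap_bound: "lyap t \<le> lyap_bound"
  unfolding lyap_bound_def lyap_0[symmetric]
  by (rule perturbed_growth_bounded[OF lyap_growth_step lyap_nonneg growth_a_pos growth_b_nonneg
        q_pos q_less_1])

lemma sqrt_lyap_le: "sqrt (lyap t * inv_rho_sum) \<le> sqrt (lyap_bound * inv_rho_sum)"
  using lyap_le_lyap_bound inv_rho_sum_pos by (simp add: mult_right_mono)

lemma sqrt_lyap_bound_nonneg: "0 \<le> sqrt (lyap_bound * inv_rho_sum)"
  using lyap_bound_nonneg inv_rho_sum_pos by simp

lemma u_within_radius: "i \<in> {1..n} \<Longrightarrow> norm (u i t - ws) \<le> radius"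
  using dist_u_le[of i t] sqrt_lyap_le[of t] sqrt_lyap_bound_nonneg
  unfolding radius_def by linarith

lemma w_within_radius: "norm (w (Suc t) - ws) \<le> radius"
  using dist_w_le[of t] sqrt_lyap_le[of t] sqrt_lyap_le[of "Suc t"] sqrt_lyap_bound_nonneg
  unfolding radius_def by linarith

end

context alg2_convergence
begin

lemma lyap_descent_within_radius:
  "lyap (Suc t) + 2 * \<sigma> * (\<Sum>i=1..n. (norm (u i (Suc t) - ws))\<^sup>2)
   \<le> lyap t + 2 * (err_const * q ^ t * radius * (1 + 5 * real n))"
proof -
  define \<delta> where "\<delta> = err_const * q ^ t"
  have \<delta>0: "0 \<le> \<delta>" using err_const_pos q_pos by (simp add: \<delta>_def)
  have "\<delta> * norm (w (Suc t) - ws) \<le> \<delta> * radius"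
    using w_within_radius \<delta>0 by (intro mult_left_mono) auto
  moreover have "(\<Sum>i=1..n. 3 * (\<delta> * norm (u i (Suc t) - ws)) + 2 * (\<delta> * norm (u i t - ws)))
      \<le> (\<Sum>i=1..n. 5 * (\<delta> * radius))"
  proof (rule sum_mono)
    fix i assume i: "i \<in> {1..n}"
    have "\<delta> * norm (u i s - ws) \<le> \<delta> * radius" for s
      using u_within_radius[OF i] \<delta>0 by (intro mult_left_mono) auto
    then show "3 * (\<delta> * norm (u i (Suc t) - ws)) + 2 * (\<delta> * norm (u i t - ws)) \<le> 5 * (\<delta> * radius)"
      by (smt (verit))
  qed
  ultimately have errors: "\<delta> * norm (w (Suc t) - ws)
      + (\<Sum>i=1..n. 3 * (\<delta> * norm (u i (Suc t) - ws)) + 2 * (\<delta> * norm (u i t - ws)))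
      \<le> \<delta> * radius * (1 + 5 * real n)"
    by (simp add: algebra_simps)
  have "lyap (Suc t) + 2 * \<sigma> * (\<Sum>i=1..n. (norm (u i (Suc t) - ws))\<^sup>2)
      \<le> lyap (Suc t) + 2 * \<sigma> * ((norm (w (Suc t) - ws))\<^sup>2 + (\<Sum>i=1..n. (norm (u i (Suc t) - ws))\<^sup>2))"
    using sigma_pos by (simp add: distrib_left)
  also have "\<dots> \<le> lyap t + 2 * (\<delta> * norm (w (Suc t) - ws)
      + (\<Sum>i=1..n. 3 * (\<delta> * norm (u i (Suc t) - ws)) + 2 * (\<delta> * norm (u i t - ws))))"
    by (rule lyap_descent[of t, folded \<delta>_def])
  also have "\<dots> \<le> lyap t + 2 * (\<delta> * radius * (1 + 5 * real n))"
    using errors by simp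
  finally show ?thesis by (simp add: \<delta>_def)
qed

text \<open>Conversely, \<open>lyap\<close> at \<open>t + 1\<close> is controlled by the distances \<open>norm (u i (Suc t) - ws)\<close>
  alone, since \<open>\<lambda>\<^sub>i\<^sup>t\<^sup>+\<^sup>1 - \<lambda>\<^sub>i\<^sup>* = residual - (\<nabla>P\<^sub>i(u\<^sub>i\<^sup>t\<^sup>+\<^sup>1) - \<nabla>P\<^sub>i(ws))\<close> and the gradients are
  Lipschitz on the ball.\<close>
lemma lyap_le_kappa:
  "lyap (Suc t) \<le> kappa * (\<Sum>i=1..n. (norm (u i (Suc t) - ws))\<^sup>2) + 2 * (err_const * q ^ t)\<^sup>2 * inv_rho_sum"
proof -
  define \<delta> where "\<delta> = err_const * q ^ t"
  define e where "e i = norm (u i (Suc t) - ws)" for i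
  have term_le: "(1 / \<rho> i) * (norm (lam i (Suc t) - lam_opt i))\<^sup>2 + \<rho> i * (e i)\<^sup>2
      \<le> 2 * \<delta>\<^sup>2 * (1 / \<rho> i) + kappa * (e i)\<^sup>2" if i: "i \<in> {1..n}" for i
  proof -
    have r: "\<rho> i > 0" using rho_pos[OF i] .
    have "lam i (Suc t) - lam_opt i = residual i (Suc t) - (gP i (u i (Suc t)) - gP i ws)"
      by (simp add: residual_def lam_opt_def algebra_simps)
    then have "norm (lam i (Suc t) - lam_opt i) \<le> \<delta> + lip * e i"
      using norm_triangle_ineq4[of "residual i (Suc t)" "gP i (u i (Suc t)) - gP i ws"]
        residual_bound(2)[OF i, of t] lip_calm(2)[of i "u i (Suc t)"] u_within_radius[OF i, of "Suc t"] i
      by (simp add: \<delta>_def e_def)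
    then have "(norm (lam i (Suc t) - lam_opt i))\<^sup>2 \<le> (\<delta> + lip * e i)\<^sup>2"
      by (intro power_mono) auto
    also have "\<dots> \<le> 2 * \<delta>\<^sup>2 + 2 * lip\<^sup>2 * (e i)\<^sup>2"
    proof -
      have "0 \<le> (\<delta> - lip * e i)\<^sup>2" by simp
      then show ?thesis by (simp add: power2_eq_square algebra_simps)
    qed
    finally have "(1 / \<rho> i) * (norm (lam i (Suc t) - lam_opt i))\<^sup>2 \<le> (1 / \<rho> i) * (2 * \<delta>\<^sup>2 + 2 * lip\<^sup>2 * (e i)\<^sup>2)"
      using r by (intro mult_left_mono) auto
    moreover have "(1 / \<rho> i) * (2 * \<delta>\<^sup>2 + 2 * lip\<^sup>2 * (e i)\<^sup>2) + \<rho> i * (e i)\<^sup>2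
        = 2 * \<delta>\<^sup>2 * (1 / \<rho> i) + (2 * lip\<^sup>2 / \<rho> i + \<rho> i) * (e i)\<^sup>2"
      by (simp add: algebra_simps)
    ultimately have "(1 / \<rho> i) * (norm (lam i (Suc t) - lam_opt i))\<^sup>2 + \<rho> i * (e i)\<^sup>2
        \<le> 2 * \<delta>\<^sup>2 * (1 / \<rho> i) + (2 * lip\<^sup>2 / \<rho> i + \<rho> i) * (e i)\<^sup>2"
      by linarith
    also have "\<dots> \<le> 2 * \<delta>\<^sup>2 * (1 / \<rho> i) + kappa * (e i)\<^sup>2"
      using kappa_term_le[OF i] by (intro add_left_mono mult_right_mono) auto
    finally show ?thesis .
  qed
  have "lyap (Suc t) \<le> (\<Sum>i=1..n. 2 * \<delta>\<^sup>2 * (1 / \<rho> i) + kappa * (e i)\<^sup>2)"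
    unfolding lyap_def e_def[symmetric] by (rule sum_mono) (rule term_le)
  also have "\<dots> = 2 * \<delta>\<^sup>2 * inv_rho_sum + kappa * (\<Sum>i=1..n. (e i)\<^sup>2)"
    by (simp add: sum.distrib sum_distrib_left inv_rho_sum_def)
  finally show ?thesis by (simp add: \<delta>_def e_def)
qed

lemma lyap_contraction_step: "lyap (Suc t) \<le> contraction * lyap t + perturb * q ^ t"
proof -
  define X where "X = (\<Sum>i=1..n. (norm (u i (Suc t) - ws))\<^sup>2)"
  define E where "E = 2 * (err_const * q ^ t * radius * (1 + 5 * real n))"
  define F where "F = 2 * (err_const * q ^ t)\<^sup>2 * inv_rho_sum"
  have pos: "kappa + 2 * \<sigma> > 0" using kappa_pos sigma_pos by simp
  have E0: "0 \<le> E" using err_const_pos q_pos radius_nonneg by (simp add: E_def)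
  have F0: "0 \<le> F" using inv_rho_sum_pos by (simp add: F_def)
  have perturbation: "E + 2 * \<sigma> * F / kappa \<le> perturb * q ^ t"
  proof -
    have "2 * \<sigma> * F / kappa = (4 * \<sigma> * inv_rho_sum / kappa) * (err_const * q ^ t)\<^sup>2"
      by (simp add: F_def)
    also have "\<dots> \<le> (4 * \<sigma> * inv_rho_sum / kappa) * (err_const\<^sup>2 * q ^ t)"
      using err_power2_le[of t] sigma_pos inv_rho_sum_pos kappa_pos by (intro mult_left_mono) auto
    finally show ?thesis by (simp add: E_def perturb_def algebra_simps)
  qed
  have "kappa * (lyap (Suc t) + 2 * \<sigma> * X) \<le> kappa * (lyap t + E)"
    using lyap_descent_within_radius[of t] kappa_pos unfolding X_def E_def by (intro mult_left_mono) auto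
  moreover have "2 * \<sigma> * lyap (Suc t) \<le> 2 * \<sigma> * (kappa * X + F)"
    using lyap_le_kappa[of t] sigma_pos unfolding X_def F_def by (intro mult_left_mono) auto
  ultimately have "(kappa + 2 * \<sigma>) * lyap (Suc t) \<le> kappa * lyap t + kappa * E + 2 * \<sigma> * F"
    by (simp add: algebra_simps)
  then have "lyap (Suc t) \<le> (kappa * lyap t + kappa * E + 2 * \<sigma> * F) / (kappa + 2 * \<sigma>)"
    using pos by (simp add: pos_le_divide_eq mult.commute)
  also have "\<dots> = contraction * lyap t + contraction * E + 2 * \<sigma> * F / (kappa + 2 * \<sigma>)"
    by (simp add: contraction_def add_divide_distrib)
  also have "\<dots> \<le> contraction * lyap t + E + 2 * \<sigma> * F / kappa"
    using contraction_bounds E0 F0 sigma_pos kappa_pos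
      mult_left_le_one_le[of E contraction] divide_left_mono[of kappa "kappa + 2 * \<sigma>" "2 * \<sigma> * F"]
    by simp
  also have "\<dots> \<le> contraction * lyap t + perturb * q ^ t" using perturbation by simp
  finally show ?thesis by simp
qed

end

context alg2_convergence
begin

lemma lyap_linear_rate: "lyap t \<le> rate_const * rate ^ t"
  unfolding rate_const_def lyap_0[symmetric]
  by (rule perturbed_contraction_linear_rate[OF lyap_contraction_step])
     (use contraction_bounds rate_bounds q_pos perturb_nonneg in auto)

lemma sqrt_lyap_rate:
  "sqrt (lyap t * inv_rho_sum) \<le> sqrt (rate_const * inv_rho_sum) * sqrt rate ^ t"
  "sqrt (lyap (Suc t) * inv_rho_sum) \<le> sqrt (rate_const * inv_rho_sum) * sqrt rate ^ t"
proof -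
  have eq: "sqrt (rate_const * rate ^ t * inv_rho_sum) = sqrt (rate_const * inv_rho_sum) * sqrt rate ^ t"
    by (simp add: real_sqrt_mult real_sqrt_power mult_ac)
  have "lyap s * inv_rho_sum \<le> rate_const * rate ^ t * inv_rho_sum" if "s \<in> {t, Suc t}" for s
  proof -
    have "rate ^ Suc t \<le> rate ^ t" using rate_bounds by (simp add: power_decreasing)
    then have "lyap s \<le> rate_const * rate ^ t"
      using that lyap_linear_rate[of s] rate_const_nonneg mult_left_mono by fastforce
    then show ?thesis using inv_rho_sum_pos by (intro mult_right_mono) auto
  qed
  then show "sqrt (lyap t * inv_rho_sum) \<le> sqrt (rate_const * inv_rho_sum) * sqrt rate ^ t"
    "sqrt (lyap (Suc t) * inv_rho_sum) \<le> sqrt (rate_const * inv_rho_sum) * sqrt rate ^ t"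
    unfolding eq[symmetric] by (auto intro: real_sqrt_le_mono)
qed

text \<open>\<open>\<tilde>\<epsilon>\<^sub>i\<^sub>,\<^sub>t\<^sub>+\<^sub>1\<close> is the max-norm of \<open>\<nabla>P\<^sub>i(w\<^sup>t\<^sup>+\<^sup>1) - \<nabla>P\<^sub>i(u\<^sub>i\<^sup>t) + residual + \<rho>\<^sub>i (u\<^sub>i\<^sup>t - w\<^sup>t\<^sup>+\<^sup>1)\<close>.\<close>
lemma eps_tilde_le_distances:
  assumes i: "i \<in> {1..n}"
  shows "eps_tilde gP \<rho> w u lam i t
         \<le> (lip + \<rho> i) * (norm (w (Suc t) - ws) + norm (u i t - ws)) + err_const * q ^ t"
proof -
  define x where "x = w (Suc t)"
  define Dn where "Dn = norm (x - ws)"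
  define cn where "cn = norm (u i t - ws)"
  have r: "\<rho> i > 0" using rho_pos[OF i] .
  have "grad_phi (gP i) (\<rho> i) (lam i t) x x - \<rho> i *\<^sub>R (x - u i t)
      = ((gP i x - gP i ws) - (gP i (u i t) - gP i ws)) + (residual i t - \<rho> i *\<^sub>R (x - u i t))"
    by (simp add: grad_phi_def residual_def algebra_simps)
  then have "eps_tilde gP \<rho> w u lam i t
      \<le> norm ((gP i x - gP i ws) - (gP i (u i t) - gP i ws)) + norm (residual i t - \<rho> i *\<^sub>R (x - u i t))"
    using infnorm_le_norm norm_triangle_ineq unfolding eps_tilde_def x_def by (metis order_trans)
  also have "\<dots> \<le> norm (gP i x - gP i ws) + norm (gP i (u i t) - gP i ws)
      + norm (residual i t) + \<rho> i * norm (x - u i t)"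
    using norm_triangle_ineq4[of "gP i x - gP i ws"] norm_triangle_ineq4[of "residual i t"] r
    by (smt (verit) norm_scaleR abs_of_pos)
  also have "\<dots> \<le> lip * Dn + lip * cn + err_const * q ^ t + \<rho> i * (Dn + cn)"
  proof -
    have "norm (gP i x - gP i ws) \<le> lip * Dn"
      using lip_calm(2)[of i x] w_within_radius[of t] i by (simp add: Dn_def x_def)
    moreover have "norm (gP i (u i t) - gP i ws) \<le> lip * cn"
      using lip_calm(2)[of i "u i t"] u_within_radius[OF i, of t] i by (simp add: cn_def)
    moreover have "norm (x - u i t) \<le> Dn + cn"
      using norm_triangle_ineq4[of "x - ws" "u i t - ws"] by (simp add: Dn_def cn_def)
    then have "\<rho> i * norm (x - u i t) \<le> \<rho> i * (Dn + cn)" using r by (intro mult_left_mono) auto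
    ultimately show ?thesis using residual_bound(1)[OF i, of t] by linarith
  qed
  also have "\<dots> = (lip + \<rho> i) * (Dn + cn) + err_const * q ^ t" by (simp add: algebra_simps)
  finally show ?thesis by (simp add: Dn_def cn_def x_def)
qed

lemma eps_tilde_le:
  assumes i: "i \<in> {1..n}"
  shows "eps_tilde gP \<rho> w u lam i t
         \<le> ((lip + \<rho> i) * (4 * sqrt (rate_const * inv_rho_sum)) + err_const) * sqrt rate ^ t"
proof -
  define K where "K = sqrt (rate_const * inv_rho_sum)"
  have "norm (w (Suc t) - ws) \<le> 3 * K * sqrt rate ^ t"
    using dist_w_le[of t] sqrt_lyap_rate[of t] by (simp add: K_def)
  moreover have "norm (u i t - ws) \<le> K * sqrt rate ^ t"
    using dist_u_le[OF i, of t] sqrt_lyap_rate(1)[of t] by (simp add: K_def)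
  ultimately have "(lip + \<rho> i) * (norm (w (Suc t) - ws) + norm (u i t - ws)) \<le> (lip + \<rho> i) * (4 * K * sqrt rate ^ t)"
    using lip_calm(1) rho_pos[OF i] by (intro mult_left_mono) auto
  moreover have "err_const * q ^ t \<le> err_const * sqrt rate ^ t"
    using q_pos sqrt_rate_bounds err_const_pos by (intro mult_left_mono power_mono) auto
  ultimately show ?thesis
    using eps_tilde_le_distances[OF i, of t] unfolding K_def by (simp add: algebra_simps)
qed

lemma stopping_criterion_le:
  "q ^ t + (\<Sum>i=1..n. eps_tilde gP \<rho> w u lam i t) \<le> eps_const * sqrt rate ^ t"
proof -
  have "q ^ t + (\<Sum>i=1..n. eps_tilde gP \<rho> w u lam i t)
      \<le> sqrt rate ^ t + (\<Sum>i=1..n. ((lip + \<rho> i) * (4 * sqrt (rate_const * inv_rho_sum)) + err_const) * sqrt rate ^ t)"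
    using q_pos sqrt_rate_bounds by (intro add_mono power_mono sum_mono eps_tilde_le) auto
  also have "\<dots> = sqrt rate ^ t
      + (\<Sum>i=1..n. (lip + \<rho> i) * (4 * sqrt (rate_const * inv_rho_sum)) + err_const) * sqrt rate ^ t"
    by (simp only: sum_distrib_right)
  also have "\<dots> = eps_const * sqrt rate ^ t" by (simp add: eps_const_def algebra_simps)
  finally show ?thesis .
qed

end

theorem theorem4p4:
  fixes n :: nat and P :: "nat \<Rightarrow> real ^ 'd \<Rightarrow> real" and gP :: "nat \<Rightarrow> real ^ 'd \<Rightarrow> real ^ 'd"
    and h :: "real ^ 'd \<Rightarrow> ereal" and \<sigma> q :: real and w0 :: "real ^ 'd" and \<rho> :: "nat \<Rightarrow> real"
  assumes "n \<ge> 1"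
    and "\<sigma> > 0"
    and "\<forall>i\<le>n. smooth_strongly_convex (P i) (gP i) \<sigma>"
    and "proper_closed_convex h"
    and "0 < q" and "q < 1"
    and "h w0 \<noteq> \<infinity>"
    and "\<forall>i\<in>{1..n}. \<rho> i > 0"
  shows "\<exists>C>0. \<forall>\<tau>. 0 < \<tau> \<and> \<tau> \<le> 1 \<longrightarrow>
           (\<forall>w u lam. alg2_run n P gP h q w0 \<rho> w u lam \<longrightarrow>
              (\<exists>t. real (Suc t) \<le> C * (1 + \<bar>ln \<tau>\<bar>) \<and>
                   q ^ t + (\<Sum>i=1..n. eps_tilde gP \<rho> w u lam i t) \<le> \<tau>))"
proof (cases "\<exists>w u lam. alg2_run n P gP h q w0 \<rho> w u lam")
  case False
  then show ?thesis by (intro exI[of _ 1]) auto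
next
  case True
  then obtain w' u' lam' where run: "alg2_run n P gP h q w0 \<rho> w' u' lam'" by blast
  interpret setting: alg2_setting n P gP h \<sigma> q w0 \<rho> using assms by unfold_locales auto
  interpret trajectory: alg2_trajectory n P gP h \<sigma> q w0 \<rho> w' u' lam' by unfold_locales (rule run)
  obtain c0 \<xi> where "\<And>y. ereal (c0 + \<xi> \<bullet> y) \<le> h y"
    using trajectory.h_affine_minorant by blast
  then obtain ws where "- (\<Sum>j\<le>n. gP j ws) \<in> subdiff h ws"
    using setting.exists_solution by blast
  then interpret solution: alg2_solution n P gP h \<sigma> q w0 \<rho> ws by unfold_locales
  show ?thesis
  proof (intro exI[of _ solution.iter_const] conjI allI impI solution.iter_const_pos)
    fix \<tau> :: real and w u lam
    assume \<tau>: "0 < \<tau> \<and> \<tau> \<le> 1" and "alg2_run n P gP h q w0 \<rho> w u lam"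
    then interpret alg2_convergence n P gP h \<sigma> q w0 \<rho> ws w u lam by unfold_locales
    obtain t where "real (Suc t) \<le> solution.iter_const * (1 + \<bar>ln \<tau>\<bar>)"
      and "solution.eps_const * sqrt solution.rate ^ t \<le> \<tau>"
      using geometric_below_threshold[OF solution.eps_const_ge_1 solution.sqrt_rate_bounds(1,2)] \<tau>
      unfolding solution.iter_const_def by blast
    then show "\<exists>t. real (Suc t) \<le> solution.iter_const * (1 + \<bar>ln \<tau>\<bar>)
        \<and> q ^ t + (\<Sum>i=1..n. eps_tilde gP \<rho> w u lam i t) \<le> \<tau>"
      using stopping_criterion_le[of t] by force
  qed
qed

end
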